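(* Let $n=2m$ be even and $1\le i\le m$. Let \[ \psi_{2i,0}=\sum_{I\subseteq\{1,\dots,n\},\ |I|=m-i}e_I\wedge f_I\otimes 1\ \in\ \wedge^{n-2i}V\otimes\Delta_+ . \] Then the projection of $\psi_{2i,0}$ onto the Cartan component $V_{\omega_n+\omega_{n-2i}}\subset\wedge^{n-2i}V\otimes\Delta_+$ is nonzero.
   Context: Let $V$ be a complex vector space of dimension $2n$ with a nondegenerate symmetric bilinear form $q$, $V=E\oplus F$ with $E,F$ maximal isotropic, bases $e_1,\dots,e_n$ of $E$ and $f_1,\dots,f_n$ of $F$ with $q(e_i,f_j)=\delta_{ij}$. For $I=\{i_1<\dots<i_k\}$, $e_I=e_{i_1}\wedge\cdots\wedge e_{i_k}$ and $f_I=f_{i_1}\wedge\cdots\wedge f_{i_k}$. $\mathrm{Spin}(V)$ is of type $D_n$ with fundamental weights $\omega_1,\dots,\omega_n$ (Bourbaki), $\omega_0:=0$; $V_\lambda$ denotes the irreducible module of highest weight $\lambda$; $\wedge^kV=V_{\omega_k}$ for $k\le n-2$. For $n$ even, $\Delta_+=\wedge^{\mathrm{even}}E=V_{\omega_n}$ and $\Delta_-=\wedge^{\mathrm{odd}}E=V_{\omega_{n-1}}$ (half-spin representations, with the $Cl(V)$-module structure on $\wedge E$ in which $v=v'+v''\in E\oplus F$ acts by $o(v')+2i(v'')$). The Cartan component of $V_\lambda\otimes V_\mu$ is the unique irreducible submodule of highest weight $\lambda+\mu$ (occurring with multiplicity one). *)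

theory Defs
  imports Complex_Main
begin

text \<open>V has basis b_1..b_2n with e_j = b_j, f_j = b_(n+j).
  An element of the exterior algebra on basis vectors indexed by nat is a
  coefficient function on finite index sets S (b_S = wedge of b_s, s in S, increasing).\<close>

type_synonym ext = "nat set \<Rightarrow> complex"
type_synonym tens = "nat set \<times> nat set \<Rightarrow> complex"

definition sgn_ins :: "nat \<Rightarrow> nat set \<Rightarrow> complex" where
  "sgn_ins c T = (-1) ^ card {t\<in>T. t < c}"

definition wedge_op :: "nat \<Rightarrow> ext \<Rightarrow> ext" where
  "wedge_op c \<phi> = (\<lambda>S. if c \<in> S then sgn_ins c (S - {c}) * \<phi> (S - {c}) else 0)"

text \<open>contraction (interior product) by the dual basis vector b_c^*\<close>
definition contr_op :: "nat \<Rightarrow> ext \<Rightarrow> ext" where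
  "contr_op c \<phi> = (\<lambda>S. if c \<notin> S then sgn_ins c S * \<phi> (insert c S) else 0)"

text \<open>q(b_a, b_(dual a)) = 1; so contraction with q(b_c, -) is contr_op (dual c)\<close>
definition dual_idx :: "nat \<Rightarrow> nat \<Rightarrow> nat" where
  "dual_idx n c = (if c \<le> n then c + n else c - n)"

text \<open>action of b_a \<and> b_b in so(V) = wedge^2 V on wedge V:
  v \<mapsto> q(b_b,v) b_a - q(b_a,v) b_b, extended as a derivation\<close>
definition vrep :: "nat \<Rightarrow> nat \<Rightarrow> nat \<Rightarrow> ext \<Rightarrow> ext" where
  "vrep n a b \<phi> = (\<lambda>S. wedge_op a (contr_op (dual_idx n b) \<phi>) S
                        - wedge_op b (contr_op (dual_idx n a) \<phi>) S)"

text \<open>Clifford action on wedge E: e_j acts by o(e_j), f_j by 2 i(f_j)\<close>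
definition cliff :: "nat \<Rightarrow> nat \<Rightarrow> ext \<Rightarrow> ext" where
  "cliff n a = (if a \<le> n then wedge_op a else (\<lambda>\<phi> S. 2 * contr_op (a - n) \<phi> S))"

text \<open>spin action of b_a \<and> b_b: (1/4)(b_a b_b - b_b b_a) in the Clifford algebra\<close>
definition srep :: "nat \<Rightarrow> nat \<Rightarrow> nat \<Rightarrow> ext \<Rightarrow> ext" where
  "srep n a b \<phi> = (\<lambda>S. (1/4) * (cliff n a (cliff n b \<phi>) S - cliff n b (cliff n a \<phi>) S))"

text \<open>action on wedge^k V \<otimes> wedge E (first coordinate: wedge V, second: wedge E)\<close>
definition trep :: "nat \<Rightarrow> nat \<Rightarrow> nat \<Rightarrow> tens \<Rightarrow> tens" where
  "trep n a b \<Phi> = (\<lambda>(S, J). vrep n a b (\<lambda>S'. \<Phi> (S', J)) S + srep n a b (\<lambda>J'. \<Phi> (S, J')) J)"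

text \<open>the module wedge^k V \<otimes> \<Delta>_+\<close>
definition tspace :: "nat \<Rightarrow> nat \<Rightarrow> tens set" where
  "tspace n k = {\<Phi>. \<forall>S J. \<Phi> (S, J) \<noteq> 0 \<longrightarrow>
      S \<subseteq> {1..2*n} \<and> card S = k \<and> J \<subseteq> {1..n} \<and> even (card J)}"

definition csubspace :: "('a \<Rightarrow> complex) set \<Rightarrow> bool" where
  "csubspace U \<longleftrightarrow> (\<lambda>_. 0) \<in> U \<and> (\<forall>x\<in>U. \<forall>y\<in>U. (\<lambda>t. x t + y t) \<in> U)
      \<and> (\<forall>c. \<forall>x\<in>U. (\<lambda>t. c * x t) \<in> U)"

definition is_submodule :: "nat \<Rightarrow> nat \<Rightarrow> tens set \<Rightarrow> bool" where
  "is_submodule n k U \<longleftrightarrow> csubspace U \<and> U \<subseteq> tspace n k \<and>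
     (\<forall>a\<in>{1..2*n}. \<forall>b\<in>{1..2*n}. \<forall>\<Phi>\<in>U. trep n a b \<Phi> \<in> U)"

definition irreducible_sub :: "nat \<Rightarrow> nat \<Rightarrow> tens set \<Rightarrow> bool" where
  "irreducible_sub n k U \<longleftrightarrow> is_submodule n k U \<and> U \<noteq> {\<lambda>_. 0} \<and>
     (\<forall>U'. is_submodule n k U' \<and> U' \<subseteq> U \<longrightarrow> U' = {\<lambda>_. 0} \<or> U' = U)"

text \<open>Cartan subalgebra spanned by h_j = e_j \<and> f_j; the weight \<omega>_n + \<omega>_k
  takes the value 1/2 + [j \<le> k] on h_j. Positive root vectors (Bourbaki D_n):
  e_a \<and> f_b (root \<epsilon>_a - \<epsilon>_b) and e_a \<and> e_b (root \<epsilon>_a + \<epsilon>_b), a < b.\<close>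
definition hw_vector :: "nat \<Rightarrow> nat \<Rightarrow> tens \<Rightarrow> bool" where
  "hw_vector n k v \<longleftrightarrow> v \<noteq> (\<lambda>_. 0) \<and>
     (\<forall>j\<in>{1..n}. trep n j (n + j) v =
        (\<lambda>x. (1/2 + (if j \<le> k then 1 else 0)) * v x)) \<and>
     (\<forall>a b. 1 \<le> a \<and> a < b \<and> b \<le> n \<longrightarrow>
        trep n a (n + b) v = (\<lambda>_. 0) \<and> trep n a b v = (\<lambda>_. 0))"

definition cartan_component :: "nat \<Rightarrow> nat \<Rightarrow> tens set \<Rightarrow> bool" where
  "cartan_component n k W \<longleftrightarrow> irreducible_sub n k W \<and> (\<exists>v\<in>W. hw_vector n k v)"

definition inv_complement :: "nat \<Rightarrow> nat \<Rightarrow> tens set \<Rightarrow> tens set \<Rightarrow> bool" where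
  "inv_complement n k W U \<longleftrightarrow> is_submodule n k U \<and> W \<inter> U = {\<lambda>_. 0} \<and>
     (\<forall>\<Phi>\<in>tspace n k. \<exists>w\<in>W. \<exists>u\<in>U. \<Phi> = (\<lambda>t. w t + u t))"

text \<open>the equivariant projection of \<psi> onto W (along the invariant complement) is nonzero\<close>
definition proj_nonzero :: "nat \<Rightarrow> nat \<Rightarrow> tens set \<Rightarrow> tens \<Rightarrow> bool" where
  "proj_nonzero n k W \<psi> \<longleftrightarrow> (\<forall>U. inv_complement n k W U \<longrightarrow> \<psi> \<notin> U)"

text \<open>\<psi>_{2i,0} = sum over I, |I| = m-i, of e_I \<and> f_I \<otimes> 1; e_I \<and> f_I = b_(I \<union> (I+n))\<close>
definition psi :: "nat \<Rightarrow> nat \<Rightarrow> nat \<Rightarrow> tens" where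
  "psi n m i = (\<lambda>(S, J). if J = {} \<and>
      (\<exists>I. I \<subseteq> {1..n} \<and> card I = m - i \<and> S = I \<union> (\<lambda>x. x + n) ` I) then 1 else 0)"

end

theory Submission
  imports Defs
begin

(* 1. A positive definite Hermitian form on wedge V (x) wedge E, with weight 2^|J| on the
      spinor basis vector e_J, is invariant: the adjoint of the action of b_a /\ b_b is the
      action of b_a' /\ b_b', where ' exchanges e_j and f_j.  Hence the orthogonal
      complement of a submodule is again a submodule.
   2. The Cartan elements h_j = e_j /\ f_j act diagonally on the standard basis.  The weight
      omega_n + omega_k occurs only at the basis tensor v0 = e_1..e_k (x) e_1..e_n, so (using
      polynomials in the h_j) every submodule containing a vector with nonzero v0-coordinate
      contains v0.
   3. Therefore the submodule generated by v0 is irreducible (a Cartan component exists),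
      every Cartan component W contains v0, and W is orthogonal to each invariant complement U.
   4. Applying the lowering operators f_(2s+2) /\ f_(2s+1) to v0 gives an explicit vector of W
      whose part at the spinor 1 is a nonzero multiple of the sum of all e_C /\ f_C, where C
      picks one index of each pair {2u-1, 2u}, u <= m - i.  Its inner product with psi is
      nonzero, so psi is not in U: the projection of psi to W is nonzero. *)

lemma sgn_ins_square: "sgn_ins c T * sgn_ins c T = 1"
  by (simp add: sgn_ins_def power_mult_distrib[symmetric] flip: power_add)

lemma sgn_ins_real: "cnj (sgn_ins c T) = sgn_ins c T"
  by (simp add: sgn_ins_def)

lemma sgn_ins_all_below: "(\<forall>t\<in>T. t < c) \<Longrightarrow> sgn_ins c T = (-1) ^ card T"
  unfolding sgn_ins_def by (metis (no_types, lifting) Collect_cong Collect_mem_eq)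

lemma wedge_op_nonzero: "wedge_op c \<phi> S \<noteq> 0 \<Longrightarrow> c \<in> S \<and> \<phi> (S - {c}) \<noteq> 0"
  by (auto simp: wedge_op_def split: if_splits)

lemma contr_op_nonzero: "contr_op c \<phi> S \<noteq> 0 \<Longrightarrow> c \<notin> S \<and> \<phi> (insert c S) \<noteq> 0"
  by (auto simp: contr_op_def split: if_splits)

lemma wedge_contr_same: "wedge_op j (contr_op j \<phi>) S = (if j \<in> S then \<phi> S else 0)"
  by (auto simp: wedge_op_def contr_op_def insert_absorb mult.assoc[symmetric] sgn_ins_square)

lemma contr_wedge_same: "contr_op j (wedge_op j \<phi>) S = (if j \<in> S then 0 else \<phi> S)"
  by (auto simp: wedge_op_def contr_op_def mult.assoc[symmetric] sgn_ins_square)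

lemma dual_idx_involutive: "1 \<le> a \<Longrightarrow> a \<le> 2*n \<Longrightarrow> dual_idx n (dual_idx n a) = a"
  by (auto simp: dual_idx_def)

lemma dual_idx_range: "1 \<le> a \<Longrightarrow> a \<le> 2*n \<Longrightarrow> 1 \<le> dual_idx n a \<and> dual_idx n a \<le> 2*n"
  by (auto simp: dual_idx_def)

definition herm :: "(nat set \<Rightarrow> real) \<Rightarrow> nat set \<Rightarrow> ext \<Rightarrow> ext \<Rightarrow> complex" where
  "herm g A \<phi> \<psi> = (\<Sum>S\<in>Pow A. of_real (g S) * \<phi> S * cnj (\<psi> S))"

lemma herm_conj_sym: "herm g A \<phi> \<psi> = cnj (herm g A \<psi> \<phi>)"
  unfolding herm_def by (simp add: mult.commute mult.left_commute)

lemma herm_scale_left: "herm g A (\<lambda>T. c * \<phi> T) \<psi> = c * herm g A \<phi> \<psi>"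
  unfolding herm_def by (simp add: sum_distrib_left algebra_simps)

lemma herm_scale_right: "herm g A \<phi> (\<lambda>T. c * \<psi> T) = cnj c * herm g A \<phi> \<psi>"
  unfolding herm_def by (simp add: sum_distrib_left algebra_simps)

lemma herm_diff_left: "herm g A (\<lambda>T. \<phi>1 T - \<phi>2 T) \<psi> = herm g A \<phi>1 \<psi> - herm g A \<phi>2 \<psi>"
  unfolding herm_def by (simp add: sum_subtractf algebra_simps)

lemma herm_diff_right: "herm g A \<phi> (\<lambda>T. \<psi>1 T - \<psi>2 T) = herm g A \<phi> \<psi>1 - herm g A \<phi> \<psi>2"
  unfolding herm_def by (simp add: sum_subtractf algebra_simps)

lemma herm_wedge_adjoint:
  assumes A: "finite A" "c \<in> A"
    and g: "\<And>T. T \<subseteq> A \<Longrightarrow> c \<notin> T \<Longrightarrow> g (insert c T) = \<mu> * g T"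
  shows "herm g A (wedge_op c \<phi>) \<psi> = herm g A \<phi> (\<lambda>T. of_real \<mu> * contr_op c \<psi> T)"
proof -
  have "herm g A (wedge_op c \<phi>) \<psi>
      = (\<Sum>S\<in>{S\<in>Pow A. c \<in> S}. of_real (g S) * (sgn_ins c (S - {c}) * \<phi> (S - {c})) * cnj (\<psi> S))"
    unfolding herm_def wedge_op_def
    by (rule sum.mono_neutral_cong_right) (use A in \<open>auto simp: insert_absorb\<close>)
  also have "\<dots> = (\<Sum>T\<in>{T\<in>Pow A. c \<notin> T}.
      of_real (g (insert c T)) * (sgn_ins c T * \<phi> T) * cnj (\<psi> (insert c T)))"
    by (rule sum.reindex_bij_witness[where i="insert c" and j="\<lambda>S. S - {c}"])
      (use A in \<open>auto simp: insert_absorb\<close>)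
  also have "\<dots> = herm g A \<phi> (\<lambda>T. of_real \<mu> * contr_op c \<psi> T)"
    unfolding herm_def contr_op_def
    by (rule sum.mono_neutral_cong_left) (use A in \<open>auto simp: g sgn_ins_real\<close>)
  finally show ?thesis .
qed

lemma herm_contr_adjoint:
  assumes A: "finite A" "c \<in> A"
    and g: "\<And>T. T \<subseteq> A \<Longrightarrow> c \<notin> T \<Longrightarrow> g (insert c T) = \<mu> * g T" and mu: "\<mu> \<noteq> 0"
  shows "herm g A (contr_op c \<phi>) \<psi> = herm g A \<phi> (\<lambda>T. of_real (1/\<mu>) * wedge_op c \<psi> T)"
proof -
  have "herm g A (wedge_op c \<psi>) \<phi> = of_real \<mu> * cnj (herm g A (contr_op c \<phi>) \<psi>)"
    using herm_wedge_adjoint[where g=g and A=A and c=c and \<mu>=\<mu> and \<phi>=\<psi> and \<psi>=\<phi>, OF A g]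
    by (simp add: herm_scale_right herm_conj_sym[of g A \<psi>])
  then have "herm g A (contr_op c \<phi>) \<psi> = cnj (herm g A (wedge_op c \<psi>) \<phi>) / of_real \<mu>"
    using mu by (simp add: field_simps)
  then show ?thesis
    by (simp add: herm_scale_right herm_conj_sym[of g A \<phi>] divide_inverse mult.commute)
qed

abbreviation vherm :: "nat \<Rightarrow> ext \<Rightarrow> ext \<Rightarrow> complex" where
  "vherm n \<equiv> herm (\<lambda>_. 1) {1..2*n}"

abbreviation sherm :: "nat \<Rightarrow> ext \<Rightarrow> ext \<Rightarrow> complex" where
  "sherm n \<equiv> herm (\<lambda>J. 2 ^ card J) {1..n}"

lemma vherm_wedge: "c \<in> {1..2*n} \<Longrightarrow> vherm n (wedge_op c \<phi>) \<psi> = vherm n \<phi> (contr_op c \<psi>)"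
  using herm_wedge_adjoint[where g="\<lambda>_. 1" and A="{1..2*n}" and \<mu>=1] by simp

lemma vherm_contr: "c \<in> {1..2*n} \<Longrightarrow> vherm n (contr_op c \<phi>) \<psi> = vherm n \<phi> (wedge_op c \<psi>)"
  using herm_contr_adjoint[where g="\<lambda>_. 1" and A="{1..2*n}" and \<mu>=1] by simp

lemma vrep_adjoint:
  assumes "a \<in> {1..2*n}" "b \<in> {1..2*n}"
  shows "vherm n (vrep n a b \<phi>) \<psi> = vherm n \<phi> (vrep n (dual_idx n b) (dual_idx n a) \<psi>)"
proof -
  have r: "dual_idx n a \<in> {1..2*n}" "dual_idx n b \<in> {1..2*n}" using assms dual_idx_range by auto
  have dd: "dual_idx n (dual_idx n a) = a" "dual_idx n (dual_idx n b) = b"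
    using assms dual_idx_involutive by auto
  show ?thesis
    unfolding vrep_def herm_diff_left herm_diff_right dd
    by (simp only: vherm_wedge[OF assms(1)] vherm_wedge[OF assms(2)]
        vherm_contr[OF r(1)] vherm_contr[OF r(2)])
qed

lemma card_insert_weight:
  "T \<subseteq> {1..n::nat} \<Longrightarrow> c \<notin> T \<Longrightarrow> (2::real) ^ card (insert c T) = 2 * 2 ^ card T"
  by (subst card_insert_disjoint) (auto intro: finite_subset)

lemma sherm_wedge: "c \<in> {1..n} \<Longrightarrow> sherm n (wedge_op c \<phi>) \<psi> = sherm n \<phi> (\<lambda>T. 2 * contr_op c \<psi> T)"
  using herm_wedge_adjoint[where g="\<lambda>J. 2 ^ card J" and A="{1..n}" and \<mu>=2, OF _ _ card_insert_weight]
  by simp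

lemma sherm_contr: "c \<in> {1..n} \<Longrightarrow> sherm n (contr_op c \<phi>) \<psi> = sherm n \<phi> (\<lambda>T. (1/2) * wedge_op c \<psi> T)"
  using herm_contr_adjoint[where g="\<lambda>J. 2 ^ card J" and A="{1..n}" and \<mu>=2, OF _ _ card_insert_weight]
  by simp

(* With the weight 2^|J|, the Clifford generators satisfy b_a^* = b_a'. *)
lemma cliff_adjoint:
  assumes "a \<in> {1..2*n}"
  shows "sherm n (cliff n a \<phi>) \<psi> = sherm n \<phi> (cliff n (dual_idx n a) \<psi>)"
proof (cases "a \<le> n")
  case True
  then have "cliff n a = wedge_op a" "cliff n (dual_idx n a) = (\<lambda>\<phi> S. 2 * contr_op a \<phi> S)"
    using assms by (auto simp: cliff_def dual_idx_def)
  moreover have "a \<in> {1..n}" using assms True by auto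
  ultimately show ?thesis by (simp only: sherm_wedge)
next
  case False
  then have "cliff n a = (\<lambda>\<phi> S. 2 * contr_op (a - n) \<phi> S)" "cliff n (dual_idx n a) = wedge_op (a - n)"
    using assms by (auto simp: cliff_def dual_idx_def)
  moreover have "a - n \<in> {1..n}" using assms False by auto
  ultimately show ?thesis by (simp only: herm_scale_left sherm_contr herm_scale_right) simp
qed

lemma srep_adjoint:
  assumes "a \<in> {1..2*n}" "b \<in> {1..2*n}"
  shows "sherm n (srep n a b \<phi>) \<psi> = sherm n \<phi> (srep n (dual_idx n b) (dual_idx n a) \<psi>)"
proof -
  have r: "dual_idx n a \<in> {1..2*n}" "dual_idx n b \<in> {1..2*n}" using assms dual_idx_range by auto
  show ?thesis
    unfolding srep_def herm_scale_left herm_scale_right herm_diff_left herm_diff_right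
    by (simp only: cliff_adjoint[OF assms(1)] cliff_adjoint[OF assms(2)]
        cliff_adjoint[OF r(1)] cliff_adjoint[OF r(2)]) simp
qed

definition tform :: "nat \<Rightarrow> tens \<Rightarrow> tens \<Rightarrow> complex" where
  "tform n \<Phi> \<Psi> = (\<Sum>x\<in>Pow {1..2*n} \<times> Pow {1..n}. of_real (2 ^ card (snd x)) * \<Phi> x * cnj (\<Psi> x))"

lemma tform_add_left: "tform n (\<lambda>t. \<Phi>1 t + \<Phi>2 t) \<Psi> = tform n \<Phi>1 \<Psi> + tform n \<Phi>2 \<Psi>"
  by (simp add: tform_def sum.distrib algebra_simps)

lemma tform_add_right: "tform n \<Phi> (\<lambda>t. \<Psi>1 t + \<Psi>2 t) = tform n \<Phi> \<Psi>1 + tform n \<Phi> \<Psi>2"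
  by (simp add: tform_def sum.distrib algebra_simps)

lemma tform_zero_right: "tform n \<Phi> (\<lambda>_. 0) = 0"
  by (simp add: tform_def)

lemma tform_scale_right: "tform n \<Phi> (\<lambda>t. c * \<Psi> t) = cnj c * tform n \<Phi> \<Psi>"
  by (simp add: tform_def sum_distrib_left algebra_simps)

lemma tform_by_spinor:
  "tform n \<Phi> \<Psi> = (\<Sum>J\<in>Pow {1..n}. of_real (2 ^ card J) * vherm n (\<lambda>S. \<Phi> (S,J)) (\<lambda>S. \<Psi> (S,J)))"
proof -
  have "tform n \<Phi> \<Psi> = (\<Sum>S\<in>Pow {1..2*n}. \<Sum>J\<in>Pow {1..n}. of_real (2 ^ card J) * \<Phi> (S,J) * cnj (\<Psi> (S,J)))"
    by (simp add: tform_def sum.cartesian_product split_def)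
  also have "\<dots> = (\<Sum>J\<in>Pow {1..n}. \<Sum>S\<in>Pow {1..2*n}. of_real (2 ^ card J) * \<Phi> (S,J) * cnj (\<Psi> (S,J)))"
    by (rule sum.swap)
  finally show ?thesis by (simp add: herm_def sum_distrib_left algebra_simps)
qed

lemma tform_by_vector:
  "tform n \<Phi> \<Psi> = (\<Sum>S\<in>Pow {1..2*n}. sherm n (\<lambda>J. \<Phi> (S,J)) (\<lambda>J. \<Psi> (S,J)))"
  unfolding tform_def herm_def by (simp add: sum.cartesian_product split_def)

lemma trep_adjoint:
  assumes ab: "a \<in> {1..2*n}" "b \<in> {1..2*n}"
  shows "tform n (trep n a b \<Phi>) \<Psi> = tform n \<Phi> (trep n (dual_idx n b) (dual_idx n a) \<Psi>)"
proof -
  let ?a' = "dual_idx n a" and ?b' = "dual_idx n b"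
  have split: "trep n c d X = (\<lambda>t. (\<lambda>(S,J). vrep n c d (\<lambda>S'. X (S',J)) S) t
                                + (\<lambda>(S,J). srep n c d (\<lambda>J'. X (S,J')) J) t)" for c d X
    by (auto simp: trep_def)
  have "tform n (\<lambda>(S,J). vrep n a b (\<lambda>S'. \<Phi> (S',J)) S) \<Psi>
      = tform n \<Phi> (\<lambda>(S,J). vrep n ?b' ?a' (\<lambda>S'. \<Psi> (S',J)) S)"
    unfolding tform_by_spinor by (simp only: split_conv vrep_adjoint[OF ab])
  moreover have "tform n (\<lambda>(S,J). srep n a b (\<lambda>J'. \<Phi> (S,J')) J) \<Psi>
      = tform n \<Phi> (\<lambda>(S,J). srep n ?b' ?a' (\<lambda>J'. \<Psi> (S,J')) J)"
    unfolding tform_by_vector by (simp only: split_conv srep_adjoint[OF ab])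
  ultimately show ?thesis
    by (subst (1 2) split) (simp only: tform_add_left tform_add_right)
qed


lemma vrep_nonzero:
  assumes "vrep n a c \<phi> S \<noteq> 0"
  shows "(a \<in> S \<and> dual_idx n c \<notin> S - {a} \<and> \<phi> (insert (dual_idx n c) (S - {a})) \<noteq> 0)
       \<or> (c \<in> S \<and> dual_idx n a \<notin> S - {c} \<and> \<phi> (insert (dual_idx n a) (S - {c})) \<noteq> 0)"
proof -
  have "wedge_op a (contr_op (dual_idx n c) \<phi>) S \<noteq> 0 \<or> wedge_op c (contr_op (dual_idx n a) \<phi>) S \<noteq> 0"
    using assms unfolding vrep_def by auto
  then show ?thesis by (auto dest!: wedge_op_nonzero contr_op_nonzero)
qed

lemma cliff_nonzero:
  assumes "cliff n x \<chi> J \<noteq> 0"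
  shows "(x \<le> n \<and> x \<in> J \<and> \<chi> (J - {x}) \<noteq> 0)
       \<or> (\<not> x \<le> n \<and> x - n \<notin> J \<and> \<chi> (insert (x - n) J) \<noteq> 0)"
  using assms unfolding cliff_def by (auto split: if_splits dest!: wedge_op_nonzero contr_op_nonzero)

lemma cliff_nonzero_parity:
  assumes "cliff n x \<chi> J \<noteq> 0" "x \<in> {1..2*n}"
  shows "\<exists>J'. \<chi> J' \<noteq> 0
           \<and> (J' \<subseteq> {1..n} \<longrightarrow> J \<subseteq> {1..n} \<and> (even (card J) \<longleftrightarrow> odd (card J')))"
  using cliff_nonzero[OF assms(1)]
proof (elim disjE conjE)
  assume x: "x \<le> n" "x \<in> J" and nz: "\<chi> (J - {x}) \<noteq> 0"
  show ?thesis
  proof (intro exI conjI impI)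
    show "\<chi> (J - {x}) \<noteq> 0" by fact
    assume "J - {x} \<subseteq> {1..n}"
    then show J: "J \<subseteq> {1..n}" using x assms(2) by auto
    then have "finite J" by (rule finite_subset) auto
    then have "card J = Suc (card (J - {x}))" using x(2) by (metis card_Suc_Diff1)
    then show "even (card J) \<longleftrightarrow> odd (card (J - {x}))" by simp
  qed
next
  assume x: "\<not> x \<le> n" "x - n \<notin> J" and nz: "\<chi> (insert (x - n) J) \<noteq> 0"
  show ?thesis
  proof (intro exI conjI impI)
    show "\<chi> (insert (x - n) J) \<noteq> 0" by fact
    assume "insert (x - n) J \<subseteq> {1..n}"
    then show J: "J \<subseteq> {1..n}" by auto
    then have "finite J" by (rule finite_subset) auto
    then have "card (insert (x - n) J) = Suc (card J)" using x(2) by simp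
    then show "even (card J) \<longleftrightarrow> odd (card (insert (x - n) J))" by simp
  qed
qed

lemma srep_nonzero:
  assumes "srep n a b \<psi> J \<noteq> 0"
  shows "\<exists>x y. x \<in> {a,b} \<and> y \<in> {a,b} \<and> cliff n x (cliff n y \<psi>) J \<noteq> 0"
  using assms unfolding srep_def by (cases "cliff n a (cliff n b \<psi>) J = 0") auto

lemma vrep_support:
  assumes supp: "\<And>S'. \<phi> S' \<noteq> 0 \<Longrightarrow> S' \<subseteq> {1..2*n} \<and> card S' = k"
    and ab: "a \<in> {1..2*n}" "b \<in> {1..2*n}" and nz: "vrep n a b \<phi> S \<noteq> 0"
  shows "S \<subseteq> {1..2*n} \<and> card S = k"
proof -
  obtain c d where cd: "c \<in> {a,b}" "c \<in> S" "d \<notin> S - {c}" "\<phi> (insert d (S - {c})) \<noteq> 0"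
    using vrep_nonzero[OF nz] by blast
  from supp[OF cd(4)] have h: "insert d (S - {c}) \<subseteq> {1..2*n}" "card (insert d (S - {c})) = k"
    by auto
  have fin: "finite (S - {c})" using h(1) by (meson finite_atLeastAtMost finite_insert finite_subset)
  have "card S = Suc (card (S - {c}))" using fin cd(2) by (metis card_Suc_Diff1 finite_Diff2 finite.emptyI finite_insert)
  also have "\<dots> = k" using h(2) fin cd(3) by simp
  finally show ?thesis using h(1) cd(1,2) ab by auto
qed

lemma srep_support:
  assumes supp: "\<And>J'. \<psi> J' \<noteq> 0 \<Longrightarrow> J' \<subseteq> {1..n} \<and> even (card J')"
    and ab: "a \<in> {1..2*n}" "b \<in> {1..2*n}" and nz: "srep n a b \<psi> J \<noteq> 0"
  shows "J \<subseteq> {1..n} \<and> even (card J)"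
proof -
  obtain x y where xy: "x \<in> {a,b}" "y \<in> {a,b}" "cliff n x (cliff n y \<psi>) J \<noteq> 0"
    using srep_nonzero[OF nz] by blast
  have x: "x \<in> {1..2*n}" and y: "y \<in> {1..2*n}" using xy ab by auto
  obtain J1 where J1: "cliff n y \<psi> J1 \<noteq> 0"
    "J1 \<subseteq> {1..n} \<longrightarrow> J \<subseteq> {1..n} \<and> (even (card J) \<longleftrightarrow> odd (card J1))"
    using cliff_nonzero_parity[OF xy(3) x] by blast
  obtain J2 where J2: "\<psi> J2 \<noteq> 0"
    "J2 \<subseteq> {1..n} \<longrightarrow> J1 \<subseteq> {1..n} \<and> (even (card J1) \<longleftrightarrow> odd (card J2))"
    using cliff_nonzero_parity[OF J1(1) y] by blast
  from supp[OF J2(1)] J2(2) J1(2) show ?thesis by auto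
qed

lemma trep_tspace:
  assumes \<Phi>: "\<Phi> \<in> tspace n k" and ab: "a \<in> {1..2*n}" "b \<in> {1..2*n}"
  shows "trep n a b \<Phi> \<in> tspace n k"
  unfolding tspace_def
proof (intro CollectI allI impI)
  fix S J assume nz: "trep n a b \<Phi> (S, J) \<noteq> 0"
  have P: "\<Phi> (S', J') \<noteq> 0 \<Longrightarrow> S' \<subseteq> {1..2*n} \<and> card S' = k \<and> J' \<subseteq> {1..n} \<and> even (card J')"
    for S' J' using \<Phi> unfolding tspace_def by blast
  from nz have "vrep n a b (\<lambda>S'. \<Phi> (S', J)) S \<noteq> 0 \<or> srep n a b (\<lambda>J'. \<Phi> (S, J')) J \<noteq> 0"
    unfolding trep_def by auto
  then show "S \<subseteq> {1..2*n} \<and> card S = k \<and> J \<subseteq> {1..n} \<and> even (card J)"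
  proof
    assume "vrep n a b (\<lambda>S'. \<Phi> (S', J)) S \<noteq> 0"
    moreover from this obtain S' where "\<Phi> (S', J) \<noteq> 0" using vrep_nonzero by blast
    then have "J \<subseteq> {1..n} \<and> even (card J)" using P by blast
    ultimately show ?thesis using vrep_support[of "\<lambda>S'. \<Phi> (S', J)" n k, OF _ ab] P by blast
  next
    assume nzs: "srep n a b (\<lambda>J'. \<Phi> (S, J')) J \<noteq> 0"
    then obtain x y where "cliff n x (cliff n y (\<lambda>J'. \<Phi> (S, J'))) J \<noteq> 0"
      using srep_nonzero by blast
    then obtain J1 where "cliff n y (\<lambda>J'. \<Phi> (S, J')) J1 \<noteq> 0"
      using cliff_nonzero by blast
    then obtain J2 where "\<Phi> (S, J2) \<noteq> 0" using cliff_nonzero by blast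
    then have "S \<subseteq> {1..2*n} \<and> card S = k" using P by blast
    moreover have "J \<subseteq> {1..n} \<and> even (card J)"
      using srep_support[of "\<lambda>J'. \<Phi> (S, J')" n, OF _ ab nzs] P by blast
    ultimately show ?thesis by blast
  qed
qed

lemma csubspace_tspace: "csubspace (tspace n k)"
  unfolding csubspace_def
proof (intro conjI ballI allI)
  show "(\<lambda>_. 0) \<in> tspace n k" by (simp add: tspace_def)
next
  fix x y assume "x \<in> tspace n k" "y \<in> tspace n k"
  moreover have "x t + y t \<noteq> 0 \<Longrightarrow> x t \<noteq> 0 \<or> y t \<noteq> 0" for t by auto
  ultimately show "(\<lambda>t. x t + y t) \<in> tspace n k" unfolding tspace_def by blast
next
  fix c x assume "x \<in> tspace n k"
  moreover have "c * x t \<noteq> 0 \<Longrightarrow> x t \<noteq> 0" for t by auto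
  ultimately show "(\<lambda>t. c * x t) \<in> tspace n k" unfolding tspace_def by blast
qed

lemma submodule_tspace: "is_submodule n k (tspace n k)"
  unfolding is_submodule_def using csubspace_tspace trep_tspace by blast

lemma submodule_Int: "is_submodule n k U \<Longrightarrow> is_submodule n k U' \<Longrightarrow> is_submodule n k (U \<inter> U')"
  unfolding is_submodule_def csubspace_def by auto

definition gen_sub :: "nat \<Rightarrow> nat \<Rightarrow> tens \<Rightarrow> tens set" where
  "gen_sub n k v = {\<Phi>. \<forall>U. is_submodule n k U \<and> v \<in> U \<longrightarrow> \<Phi> \<in> U}"

lemma submodule_gen_sub:
  assumes v: "v \<in> tspace n k"
  shows "is_submodule n k (gen_sub n k v)"
  unfolding is_submodule_def csubspace_def
proof (intro conjI ballI allI)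
  show "gen_sub n k v \<subseteq> tspace n k"
    unfolding gen_sub_def using submodule_tspace v by blast
qed (auto simp: gen_sub_def is_submodule_def csubspace_def)

lemma gen_sub_minimal: "is_submodule n k U \<Longrightarrow> v \<in> U \<Longrightarrow> gen_sub n k v \<subseteq> U"
  unfolding gen_sub_def by blast

lemma gen_sub_generator: "v \<in> gen_sub n k v"
  unfolding gen_sub_def by blast

lemma tform_definite:
  assumes "\<Phi> \<in> tspace n k" "tform n \<Phi> \<Phi> = 0"
  shows "\<Phi> = (\<lambda>_. 0)"
proof
  fix x
  let ?A = "Pow {1..2*n} \<times> Pow {1..n}"
  have eq: "tform n \<Phi> \<Phi> = of_real (\<Sum>x\<in>?A. 2 ^ card (snd x) * (cmod (\<Phi> x))\<^sup>2)"
    unfolding tform_def of_real_sum of_real_mult complex_norm_square by (simp add: mult.assoc)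
  have "complex_of_real (\<Sum>x\<in>?A. 2 ^ card (snd x) * (cmod (\<Phi> x))\<^sup>2) = 0"
    by (simp only: eq[symmetric] assms(2))
  then have "(\<Sum>x\<in>?A. 2 ^ card (snd x) * (cmod (\<Phi> x))\<^sup>2) = 0"
    by (simp only: of_real_eq_0_iff)
  then have zero: "\<forall>x\<in>?A. 2 ^ card (snd x) * (cmod (\<Phi> x))\<^sup>2 = (0::real)"
    by (subst (asm) sum_nonneg_eq_0_iff) auto
  show "\<Phi> x = 0"
  proof (rule ccontr)
    assume nz: "\<Phi> x \<noteq> 0"
    then have "x \<in> ?A" using assms(1) unfolding tspace_def by (cases x) auto
    with zero nz show False by auto
  qed
qed

definition perp :: "nat \<Rightarrow> nat \<Rightarrow> tens set \<Rightarrow> tens set" where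
  "perp n k U = {\<Psi> \<in> tspace n k. \<forall>\<Phi>\<in>U. tform n \<Phi> \<Psi> = 0}"

(* By invariance of the form, the orthogonal complement of a submodule is a submodule. *)
lemma submodule_perp:
  assumes U: "is_submodule n k U"
  shows "is_submodule n k (perp n k U)"
  unfolding is_submodule_def
proof (intro conjI ballI)
  show "csubspace (perp n k U)"
    using csubspace_tspace[of n k]
    unfolding csubspace_def perp_def by (auto simp: tform_zero_right tform_add_right tform_scale_right)
  show "perp n k U \<subseteq> tspace n k" unfolding perp_def by auto
  fix a b \<Psi> assume ab: "a \<in> {1..2*n}" "b \<in> {1..2*n}" and P: "\<Psi> \<in> perp n k U"
  have r: "dual_idx n a \<in> {1..2*n}" "dual_idx n b \<in> {1..2*n}" using ab dual_idx_range by auto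
  have dd: "dual_idx n (dual_idx n a) = a" "dual_idx n (dual_idx n b) = b"
    using ab dual_idx_involutive by auto
  have "tform n \<Phi> (trep n a b \<Psi>) = 0" if "\<Phi> \<in> U" for \<Phi>
  proof -
    have "trep n (dual_idx n b) (dual_idx n a) \<Phi> \<in> U" using U that r unfolding is_submodule_def by auto
    then have "tform n (trep n (dual_idx n b) (dual_idx n a) \<Phi>) \<Psi> = 0" using P unfolding perp_def by auto
    then show ?thesis using trep_adjoint[OF r(2) r(1), of \<Phi> \<Psi>] dd by simp
  qed
  moreover have "trep n a b \<Psi> \<in> tspace n k" using P ab trep_tspace unfolding perp_def by auto
  ultimately show "trep n a b \<Psi> \<in> perp n k U" unfolding perp_def by auto
qed


(* The eigenvalue of h_j = e_j /\ f_j on the basis tensor x = (S, J). *)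
definition hweight :: "nat \<Rightarrow> nat \<Rightarrow> nat set \<times> nat set \<Rightarrow> complex" where
  "hweight n j x = (if j \<in> fst x then 1 else 0) - (if n + j \<in> fst x then 1 else 0)
                  + (if j \<in> snd x then 1 else 0) - 1/2"

lemma cartan_action:
  assumes "1 \<le> j" "j \<le> n"
  shows "trep n j (n + j) \<Phi> = (\<lambda>x. hweight n j x * \<Phi> x)"
proof
  fix x :: "nat set \<times> nat set"
  obtain S J where x: "x = (S, J)" by force
  have dual: "dual_idx n (n + j) = j" "dual_idx n j = n + j" using assms by (auto simp: dual_idx_def)
  have cl: "cliff n j = wedge_op j" "cliff n (n + j) = (\<lambda>\<phi> S. 2 * contr_op j \<phi> S)"
    using assms by (auto simp: cliff_def)
  have scale: "contr_op j (\<lambda>S. 2 * \<phi> S) = (\<lambda>S. 2 * contr_op j \<phi> S)"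
    "wedge_op j (\<lambda>S. 2 * \<phi> S) = (\<lambda>S. 2 * wedge_op j \<phi> S)" for \<phi>
    by (auto simp: contr_op_def wedge_op_def)
  show "trep n j (n + j) \<Phi> x = hweight n j x * \<Phi> x"
    unfolding x trep_def vrep_def srep_def dual cl scale
    by (simp add: wedge_contr_same contr_wedge_same hweight_def algebra_simps)
qed

lemma hweight_values:
  "hweight n j x = -3/2 \<or> hweight n j x = -1/2 \<or> hweight n j x = 1/2 \<or> hweight n j x = 3/2"
  unfolding hweight_def by (cases "j \<in> fst x"; cases "n + j \<in> fst x"; cases "j \<in> snd x") auto

lemma hweight_top:
  assumes "hweight n j (S,J) = 3/2" shows "j \<in> S" "j \<in> J"
  using assms unfolding hweight_def by (cases "j \<in> S"; cases "n + j \<in> S"; cases "j \<in> J"; auto)+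

lemma hweight_half:
  assumes "hweight n j (S,J) = 1/2" "j \<notin> S" "n + j \<notin> S" shows "j \<in> J"
  using assms unfolding hweight_def by (cases "j \<in> J") auto

(* The highest weight vector v0 = e_1 /\ ... /\ e_k (x) e_1 /\ ... /\ e_n and its weight
   omega_n + omega_k, whose value on h_j is hw_weight k j. *)
definition hw_index :: "nat \<Rightarrow> nat \<Rightarrow> nat set \<times> nat set" where
  "hw_index n k = ({1..k}, {1..n})"

definition hw_vec :: "nat \<Rightarrow> nat \<Rightarrow> tens" where
  "hw_vec n k = (\<lambda>x. if x = hw_index n k then 1 else 0)"

definition hw_weight :: "nat \<Rightarrow> nat \<Rightarrow> complex" where
  "hw_weight k j = 1/2 + (if j \<le> k then 1 else 0)"

lemma hw_vec_nonzero: "hw_vec n k \<noteq> (\<lambda>_. 0)"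
  unfolding hw_vec_def by (metis zero_neq_one)

lemma hw_vec_tspace: "k \<le> n \<Longrightarrow> even n \<Longrightarrow> hw_vec n k \<in> tspace n k"
  unfolding tspace_def hw_vec_def hw_index_def by auto

lemma tform_hw_vec: "k \<le> 2*n \<Longrightarrow> tform n \<Phi> (hw_vec n k) = 2 ^ n * \<Phi> (hw_index n k)"
proof -
  assume k: "k \<le> 2*n"
  have "tform n \<Phi> (hw_vec n k) = (\<Sum>x\<in>Pow {1..2*n} \<times> Pow {1..n}.
      if x = hw_index n k then of_real (2 ^ card (snd x)) * \<Phi> x else 0)"
    unfolding tform_def hw_vec_def by (intro sum.cong) auto
  also have "\<dots> = of_real (2 ^ card (snd (hw_index n k))) * \<Phi> (hw_index n k)"
    using k by (subst sum.delta) (auto simp: hw_index_def)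
  finally show ?thesis by (simp add: hw_index_def)
qed

lemma hw_index_unique:
  assumes S: "S \<subseteq> {1..2*n}" "card S = k" and J: "J \<subseteq> {1..n}" and k: "k \<le> n"
    and w: "\<forall>j\<in>{1..n}. hweight n j (S,J) = hw_weight k j"
  shows "(S, J) = hw_index n k"
proof -
  have sub: "{1..k} \<subseteq> S"
  proof
    fix j assume j: "j \<in> {1..k}"
    then have "hweight n j (S,J) = 3/2" using w k by (auto simp: hw_weight_def)
    then show "j \<in> S" by (rule hweight_top)
  qed
  have "finite S" using S(1) by (rule finite_subset) auto
  then have Seq: "S = {1..k}" using card_subset_eq[OF _ sub] S(2) by simp
  have "{1..n} \<subseteq> J"
  proof
    fix j assume j: "j \<in> {1..n}"
    show "j \<in> J"
    proof (cases "j \<le> k")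
      case True
      then have "hweight n j (S,J) = 3/2" using w j by (auto simp: hw_weight_def)
      then show ?thesis by (rule hweight_top)
    next
      case False
      then have "hweight n j (S,J) = 1/2" using w j by (auto simp: hw_weight_def)
      moreover have "j \<notin> S" "n + j \<notin> S" using False k j Seq by auto
      ultimately show ?thesis by (rule hweight_half)
    qed
  qed
  then have "J = {1..n}" using J by auto
  then show ?thesis using Seq by (simp add: hw_index_def)
qed

(* A polynomial in h_j vanishing at every eigenvalue except hw_weight k j. *)
definition weight_filter :: "nat \<Rightarrow> nat \<Rightarrow> nat \<Rightarrow> nat set \<times> nat set \<Rightarrow> complex" where
  "weight_filter n k j x = (hweight n j x + 3/2) * (hweight n j x + 1/2)
                           * (hweight n j x - (if j \<le> k then 1/2 else 3/2))"

lemma weight_filter_nonzero_iff: "weight_filter n k j x \<noteq> 0 \<longleftrightarrow> hweight n j x = hw_weight k j"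
proof
  assume "weight_filter n k j x \<noteq> 0"
  then show "hweight n j x = hw_weight k j"
    using hweight_values[of n j x] unfolding weight_filter_def hw_weight_def by (cases "j \<le> k") auto
next
  assume h: "hweight n j x = hw_weight k j"
  have "weight_filter n k j x
      = (hw_weight k j + 3/2) * (hw_weight k j + 1/2) * (hw_weight k j - (if j \<le> k then 1/2 else 3/2))"
    unfolding weight_filter_def h ..
  also have "\<dots> \<noteq> 0" unfolding hw_weight_def by (cases "j \<le> k") simp_all
  finally show "weight_filter n k j x \<noteq> 0" .
qed

lemma submodule_hweight_shift:
  assumes U: "is_submodule n k U" and \<Phi>: "\<Phi> \<in> U" and j: "j \<in> {1..n}"
  shows "(\<lambda>x. (hweight n j x - \<mu>) * \<Phi> x) \<in> U"
proof -
  have cs: "csubspace U" using U by (simp add: is_submodule_def)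
  have "trep n j (n + j) \<Phi> \<in> U" using U \<Phi> j unfolding is_submodule_def by auto
  moreover have "(\<lambda>t. (- \<mu>) * \<Phi> t) \<in> U" using cs \<Phi> unfolding csubspace_def by blast
  ultimately have "(\<lambda>t. trep n j (n + j) \<Phi> t + (- \<mu>) * \<Phi> t) \<in> U"
    using cs unfolding csubspace_def by (simp only: Ball_def)
  moreover have "(\<lambda>t. trep n j (n + j) \<Phi> t + (- \<mu>) * \<Phi> t) = (\<lambda>x. (hweight n j x - \<mu>) * \<Phi> x)"
  proof -
    have "1 \<le> j" "j \<le> n" using j by auto
    then show ?thesis unfolding cartan_action[OF \<open>1 \<le> j\<close> \<open>j \<le> n\<close>] by (simp add: algebra_simps)
  qed
  ultimately show ?thesis by simp
qed

lemma submodule_weight_filters: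
  assumes U: "is_submodule n k U" and \<Phi>: "\<Phi> \<in> U"
  shows "finite X \<Longrightarrow> X \<subseteq> {1..n} \<Longrightarrow> (\<lambda>x. (\<Prod>j\<in>X. weight_filter n k j x) * \<Phi> x) \<in> U"
proof (induction X rule: finite_induct)
  case empty then show ?case using \<Phi> by simp
next
  case (insert j X)
  let ?h = "\<lambda>x. hweight n j x"
  have j: "j \<in> {1..n}" using insert.prems by simp
  have "(\<lambda>x. (\<Prod>j\<in>X. weight_filter n k j x) * \<Phi> x) \<in> U" using insert by simp
  then have "(\<lambda>x. (?h x - (if j \<le> k then 1/2 else 3/2)) * ((\<Prod>j\<in>X. weight_filter n k j x) * \<Phi> x)) \<in> U"
    by (rule submodule_hweight_shift[OF U _ j])
  then have "(\<lambda>x. (?h x - (-1/2)) * ((?h x - (if j \<le> k then 1/2 else 3/2))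
                 * ((\<Prod>j\<in>X. weight_filter n k j x) * \<Phi> x))) \<in> U"
    by (rule submodule_hweight_shift[OF U _ j])
  then have "(\<lambda>x. (?h x - (-3/2)) * ((?h x - (-1/2)) * ((?h x - (if j \<le> k then 1/2 else 3/2))
                 * ((\<Prod>j\<in>X. weight_filter n k j x) * \<Phi> x)))) \<in> U"
    by (rule submodule_hweight_shift[OF U _ j])
  moreover have "(\<lambda>x. (?h x - (-3/2)) * ((?h x - (-1/2)) * ((?h x - (if j \<le> k then 1/2 else 3/2))
                 * ((\<Prod>j\<in>X. weight_filter n k j x) * \<Phi> x))))
      = (\<lambda>x. weight_filter n k j x * ((\<Prod>j\<in>X. weight_filter n k j x) * \<Phi> x))"
    unfolding weight_filter_def by (rule ext) (simp only: minus_divide_left[symmetric] diff_minus_eq_add mult.assoc)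
  ultimately show ?case
    using insert(1,2) by (simp add: mult.assoc)
qed

lemma weight_projection:
  assumes \<Phi>: "\<Phi> \<in> tspace n k" and k: "k \<le> n"
  defines "P \<equiv> \<lambda>x. \<Prod>j\<in>{1..n}. weight_filter n k j x"
  shows "(\<lambda>x. P x * \<Phi> x) = (\<lambda>x. (P (hw_index n k) * \<Phi> (hw_index n k)) * hw_vec n k x)"
proof
  fix x
  show "P x * \<Phi> x = P (hw_index n k) * \<Phi> (hw_index n k) * hw_vec n k x"
  proof (cases "P x * \<Phi> x = 0")
    case False
    obtain S J where x: "x = (S,J)" by force
    from False have "\<Phi> (S,J) \<noteq> 0" unfolding x by simp
    with \<Phi> have "S \<subseteq> {1..2*n}" "card S = k" "J \<subseteq> {1..n}" unfolding tspace_def by blast+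
    moreover from False have "\<forall>j\<in>{1..n}. weight_filter n k j x \<noteq> 0"
      unfolding P_def by (simp add: prod_zero_iff)
    then have "\<forall>j\<in>{1..n}. hweight n j (S,J) = hw_weight k j"
      unfolding x weight_filter_nonzero_iff .
    ultimately have "x = hw_index n k" using hw_index_unique k x by blast
    then show ?thesis by (simp add: hw_vec_def)
  next
    case True
    show ?thesis
    proof (cases "x = hw_index n k")
      case True
      then show ?thesis using \<open>P x * \<Phi> x = 0\<close> by (simp add: hw_vec_def)
    qed (use True in \<open>simp add: hw_vec_def\<close>)
  qed
qed

lemma submodule_contains_hw_vec:
  assumes U: "is_submodule n k U" and \<Phi>: "\<Phi> \<in> U" and nz: "\<Phi> (hw_index n k) \<noteq> 0" and k: "k \<le> n"
  shows "hw_vec n k \<in> U"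
proof -
  let ?P = "\<lambda>x. \<Prod>j\<in>{1..n}. weight_filter n k j x"
  define c where "c = ?P (hw_index n k) * \<Phi> (hw_index n k)"
  have "weight_filter n k j (hw_index n k) \<noteq> 0" if "j \<in> {1..n}" for j
  proof (rule weight_filter_nonzero_iff[THEN iffD2])
    show "hweight n j (hw_index n k) = hw_weight k j"
      using that k unfolding hweight_def hw_weight_def hw_index_def by auto
  qed
  then have "?P (hw_index n k) \<noteq> 0" by simp
  then have c: "c \<noteq> 0" using nz unfolding c_def by simp
  have "\<Phi> \<in> tspace n k" using U \<Phi> unfolding is_submodule_def by auto
  then have proj: "(\<lambda>x. ?P x * \<Phi> x) = (\<lambda>x. c * hw_vec n k x)"
    unfolding c_def using k by (rule weight_projection)
  have "(\<lambda>x. ?P x * \<Phi> x) \<in> U" by (rule submodule_weight_filters[OF U \<Phi>]) auto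
  then have "(\<lambda>x. c * hw_vec n k x) \<in> U" unfolding proj .
  then have "(\<lambda>x. (1 / c) * (c * hw_vec n k x)) \<in> U"
    using U unfolding is_submodule_def csubspace_def by (simp only: Ball_def)
  then show ?thesis using c by simp
qed


lemma hw_vec_nonzero_iff: "hw_vec n k (S, J) \<noteq> 0 \<longleftrightarrow> S = {1..k} \<and> J = {1..n}"
  by (simp add: hw_vec_def hw_index_def)

lemma raise_vector_zero:
  assumes ab: "1 \<le> a" "a < b" "b \<le> n" and k: "k \<le> n" and c: "c = n + b \<or> c = b"
  shows "vrep n a c (\<lambda>S'. hw_vec n k (S', J)) S = 0"
proof (rule ccontr)
  assume nz: "vrep n a c (\<lambda>S'. hw_vec n k (S', J)) S \<noteq> 0"
  have cases: "(a \<in> S \<and> insert (dual_idx n c) (S - {a}) = {1..k})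
           \<or> insert (dual_idx n a) (S - {c}) = {1..k}"
    using vrep_nonzero[OF nz] unfolding hw_vec_nonzero_iff by blast
  have "dual_idx n a \<notin> {1..k}" using ab k by (auto simp: dual_idx_def)
  then have "insert (dual_idx n a) (S - {c}) \<noteq> {1..k}" by blast
  with cases have ins: "insert (dual_idx n c) (S - {a}) = {1..k}" by simp
  show False
  proof (cases "c = n + b")
    case True
    then have "dual_idx n c = b" using ab by (simp add: dual_idx_def)
    then have "b \<in> {1..k}" using ins insertI1 by metis
    then have "a \<in> {1..k}" using ab by auto
    then have "a \<in> insert b (S - {a})" using ins \<open>dual_idx n c = b\<close> by simp
    then show False using ab by simp
  next
    case False
    then have "dual_idx n c = b + n" using c ab by (simp add: dual_idx_def)
    then have "b + n \<in> {1..k}" using ins insertI1 by metis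
    then show False using k ab by auto
  qed
qed

(* ... and on the spinor factor, where e_1 /\ ... /\ e_n is the highest weight vector of Delta_+. *)
lemma raise_spinor_zero:
  assumes ab: "1 \<le> a" "a < b" "b \<le> n" and c: "c = n + b \<or> c = b"
  shows "srep n a c (\<lambda>J'. hw_vec n k (S, J')) J = 0"
proof (rule ccontr)
  let ?v = "\<lambda>J'. hw_vec n k (S, J')"
  assume "srep n a c ?v J \<noteq> 0"
  then obtain y z where yz: "y \<in> {a,c}" "z \<in> {a,c}" "cliff n y (cliff n z ?v) J \<noteq> 0"
    by (blast dest: srep_nonzero)
  have bn: "b \<in> {1..n}" "a \<in> {1..n}" "a \<noteq> b" using ab by auto
  from cliff_nonzero[OF yz(3)] show False
  proof (elim disjE conjE)
    assume y: "y \<le> n" "y \<in> J" and "cliff n z ?v (J - {y}) \<noteq> 0"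
    from cliff_nonzero[OF this(3)] show False
    proof (elim disjE conjE)
      assume z: "z \<le> n" "z \<in> J - {y}" and "?v (J - {y} - {z}) \<noteq> 0"
      then have e: "J - {y} - {z} = {1..n}" unfolding hw_vec_nonzero_iff by simp
      have "z \<in> {1..n}" using z yz ab c by auto
      then have "z \<in> J - {y} - {z}" unfolding e .
      then show False by simp
    next
      assume z: "\<not> z \<le> n" "z - n \<notin> J - {y}" and "?v (insert (z - n) (J - {y})) \<noteq> 0"
      then have e: "insert (z - n) (J - {y}) = {1..n}" unfolding hw_vec_nonzero_iff by simp
      have "y = a" "z - n = b" using y z yz ab c by auto
      moreover have "a \<in> insert (z - n) (J - {y})" unfolding e using bn by simp
      ultimately show False using bn by simp
    qed
  next
    assume y: "\<not> y \<le> n" "y - n \<notin> J" and "cliff n z ?v (insert (y - n) J) \<noteq> 0"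
    from cliff_nonzero[OF this(3)] show False
    proof (elim disjE conjE)
      assume z: "z \<le> n" "z \<in> insert (y - n) J" and "?v (insert (y - n) J - {z}) \<noteq> 0"
      then have e: "insert (y - n) J - {z} = {1..n}" unfolding hw_vec_nonzero_iff by simp
      have "z \<in> {1..n}" using z yz ab c by auto
      then have "z \<in> insert (y - n) J - {z}" unfolding e .
      then show False by simp
    next
      assume z: "\<not> z \<le> n" "z - n \<notin> insert (y - n) J"
      have "y = n + b" "z = n + b" using y z yz ab c by auto
      then show False using z by simp
    qed
  qed
qed

lemma hw_vector_hw_vec:
  assumes k: "k \<le> n"
  shows "hw_vector n k (hw_vec n k)"
  unfolding hw_vector_def
proof (intro conjI ballI allI impI)
  show "hw_vec n k \<noteq> (\<lambda>_. 0)" by (rule hw_vec_nonzero)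
next
  fix j assume j: "j \<in> {1..n}"
  have weight: "hweight n j x * hw_vec n k x = (1/2 + (if j \<le> k then 1 else 0)) * hw_vec n k x" for x
    using j k by (cases "x = hw_index n k") (auto simp: hw_vec_def hweight_def hw_index_def)
  have "trep n j (n + j) (hw_vec n k) = (\<lambda>x. hweight n j x * hw_vec n k x)"
    using j by (intro cartan_action) auto
  also have "\<dots> = (\<lambda>x. (1/2 + (if j \<le> k then 1 else 0)) * hw_vec n k x)"
    using weight by (rule ext)
  finally show "trep n j (n + j) (hw_vec n k) = (\<lambda>x. (1/2 + (if j \<le> k then 1 else 0)) * hw_vec n k x)" .
next
  fix a b assume "1 \<le> a \<and> a < b \<and> b \<le> n"
  then show "trep n a (n + b) (hw_vec n k) = (\<lambda>_. 0)" "trep n a b (hw_vec n k) = (\<lambda>_. 0)"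
    using raise_vector_zero[OF _ _ _ k] raise_spinor_zero by (auto simp: trep_def)
qed

lemma hw_vector_gives_hw_vec:
  assumes W: "is_submodule n k W" and v: "v \<in> W" and hw: "hw_vector n k v" and k: "k \<le> n"
  shows "hw_vec n k \<in> W"
proof -
  have vt: "v \<in> tspace n k" using W v unfolding is_submodule_def by auto
  have weight: "hweight n j x = hw_weight k j" if x: "v x \<noteq> 0" and j: "j \<in> {1..n}" for x j
  proof -
    have "trep n j (n + j) v = (\<lambda>x. hw_weight k j * v x)"
      using hw j unfolding hw_vector_def hw_weight_def by auto
    moreover have "trep n j (n + j) v = (\<lambda>x. hweight n j x * v x)"
      using j by (intro cartan_action) auto
    ultimately have "hweight n j x * v x = hw_weight k j * v x" by metis
    then show ?thesis using x by simp
  qed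
  obtain x where x: "v x \<noteq> 0" using hw unfolding hw_vector_def by (meson ext)
  obtain S J where xs: "x = (S,J)" by force
  have "S \<subseteq> {1..2*n}" "card S = k" "J \<subseteq> {1..n}" using vt x unfolding tspace_def xs by auto
  moreover have "\<forall>j\<in>{1..n}. hweight n j (S,J) = hw_weight k j" using weight x xs by auto
  ultimately have "x = hw_index n k" using hw_index_unique k xs by blast
  then show ?thesis using submodule_contains_hw_vec[OF W v _ k] x by blast
qed

lemma hw_vec_perp:
  assumes "\<And>\<Phi>. \<Phi> \<in> U \<Longrightarrow> \<Phi> (hw_index n k) = 0" and k: "k \<le> n" "even n"
  shows "hw_vec n k \<in> perp n k U"
  unfolding perp_def using assms hw_vec_tspace[OF k] tform_hw_vec[of k n] by auto

(* The submodule generated by v0 is irreducible: a submodule U' of it either meets the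
   v0-coordinate (and then contains v0) or is orthogonal to v0, hence to itself. *)
lemma cartan_component_exists:
  assumes k: "k \<le> n" "even n"
  shows "cartan_component n k (gen_sub n k (hw_vec n k))"
proof -
  let ?W = "gen_sub n k (hw_vec n k)"
  have sub: "is_submodule n k ?W" using submodule_gen_sub hw_vec_tspace[OF k] by blast
  have v0: "hw_vec n k \<in> ?W" by (rule gen_sub_generator)
  have "U' = {\<lambda>_. 0} \<or> U' = ?W" if U': "is_submodule n k U'" "U' \<subseteq> ?W" for U'
  proof (cases "\<exists>\<Phi>\<in>U'. \<Phi> (hw_index n k) \<noteq> 0")
    case True
    then have "hw_vec n k \<in> U'" using submodule_contains_hw_vec U' k by blast
    then have "?W \<subseteq> U'" using gen_sub_minimal U' by blast
    then show ?thesis using U' by blast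
  next
    case False
    then have "hw_vec n k \<in> perp n k U'" using hw_vec_perp k by blast
    then have "?W \<subseteq> perp n k U'" using gen_sub_minimal submodule_perp U' by blast
    then have "\<forall>\<Phi>\<in>U'. \<Phi> = (\<lambda>_. 0)" using U' tform_definite unfolding perp_def by blast
    moreover have "(\<lambda>_. 0) \<in> U'" using U' unfolding is_submodule_def csubspace_def by blast
    ultimately show ?thesis by blast
  qed
  then have "irreducible_sub n k ?W"
    unfolding irreducible_sub_def using sub v0 hw_vec_nonzero by blast
  then show ?thesis unfolding cartan_component_def using v0 hw_vector_hw_vec[OF k(1)] by blast
qed

lemma cartan_component_hw_vec:
  assumes W: "cartan_component n k W" and k: "k \<le> n"
  shows "hw_vec n k \<in> W"
proof -
  have "is_submodule n k W" using W unfolding cartan_component_def irreducible_sub_def by blast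
  then show ?thesis
    using W hw_vector_gives_hw_vec[OF _ _ _ k] unfolding cartan_component_def by blast
qed

lemma cartan_component_perp_complement:
  assumes W: "cartan_component n k W" and U: "inv_complement n k W U" and k: "k \<le> n" "even n"
  shows "W \<subseteq> perp n k U"
proof -
  have irr: "irreducible_sub n k W" using W unfolding cartan_component_def by blast
  then have subW: "is_submodule n k W" unfolding irreducible_sub_def by blast
  have v0W: "hw_vec n k \<in> W" using cartan_component_hw_vec[OF W k(1)] .
  have subU: "is_submodule n k U" and WU: "W \<inter> U = {\<lambda>_. 0}"
    using U unfolding inv_complement_def by auto
  have "\<Phi> (hw_index n k) = 0" if "\<Phi> \<in> U" for \<Phi>
  proof (rule ccontr)
    assume "\<Phi> (hw_index n k) \<noteq> 0"
    then have "hw_vec n k \<in> W \<inter> U" using submodule_contains_hw_vec[OF subU that _ k(1)] v0W by blast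
    then show False using WU hw_vec_nonzero by auto
  qed
  then have "hw_vec n k \<in> W \<inter> perp n k U" using hw_vec_perp k v0W by blast
  moreover have "is_submodule n k (W \<inter> perp n k U)"
    using submodule_Int[OF subW submodule_perp[OF subU]] .
  ultimately have "W \<inter> perp n k U = W"
    using irr hw_vec_nonzero unfolding irreducible_sub_def by blast
  then show ?thesis by blast
qed

(* The lowering operator f_(2s+2) /\ f_(2s+1) of so(V), and its explicit action on the two
   tensor factors. *)
definition lower :: "nat \<Rightarrow> nat \<Rightarrow> tens \<Rightarrow> tens" where
  "lower n s = trep n (n + 2*s + 2) (n + 2*s + 1)"

definition lower_vec :: "nat \<Rightarrow> nat \<Rightarrow> ext \<Rightarrow> ext" where
  "lower_vec n s \<phi> S =
    (if n+2*s+2 \<in> S \<and> 2*s+1 \<notin> S then sgn_ins (n+2*s+2) (S - {n+2*s+2}) * sgn_ins (2*s+1) (S - {n+2*s+2})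
        * \<phi> (insert (2*s+1) (S - {n+2*s+2})) else 0)
  - (if n+2*s+1 \<in> S \<and> 2*s+2 \<notin> S then sgn_ins (n+2*s+1) (S - {n+2*s+1}) * sgn_ins (2*s+2) (S - {n+2*s+1})
        * \<phi> (insert (2*s+2) (S - {n+2*s+1})) else 0)"

definition lower_spin :: "nat \<Rightarrow> ext \<Rightarrow> ext" where
  "lower_spin s \<psi> J = (if 2*s+1 \<notin> J \<and> 2*s+2 \<notin> J then
      (sgn_ins (2*s+2) J * sgn_ins (2*s+1) (insert (2*s+2) J) - sgn_ins (2*s+1) J * sgn_ins (2*s+2) (insert (2*s+1) J))
      * \<psi> (insert (2*s+1) (insert (2*s+2) J)) else 0)"

lemma lower_eq:
  assumes "2*s+2 \<le> n"
  shows "lower n s \<Phi> (S,J) = lower_vec n s (\<lambda>S'. \<Phi> (S',J)) S + lower_spin s (\<lambda>J'. \<Phi> (S,J')) J"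
proof -
  have d: "dual_idx n (n + 2*s + 1) = 2*s+1" "dual_idx n (n + 2*s + 2) = 2*s+2" by (auto simp: dual_idx_def)
  have c: "cliff n (n + 2*s + 2) = (\<lambda>\<phi> S. 2 * contr_op (2*s+2) \<phi> S)"
          "cliff n (n + 2*s + 1) = (\<lambda>\<phi> S. 2 * contr_op (2*s+1) \<phi> S)" by (auto simp: cliff_def)
  have cl: "contr_op j (\<lambda>S. 2 * \<phi> S) = (\<lambda>S. 2 * contr_op j \<phi> S)" for j \<phi>
    by (auto simp: contr_op_def)
  have v: "vrep n (n + 2*s + 2) (n + 2*s + 1) \<phi> S = lower_vec n s \<phi> S" for \<phi>
    unfolding vrep_def d lower_vec_def wedge_op_def contr_op_def using assms by auto
  have sr: "srep n (n + 2*s + 2) (n + 2*s + 1) \<psi> J = lower_spin s \<psi> J" for \<psi>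
    unfolding srep_def c cl lower_spin_def contr_op_def by (auto simp: insert_commute algebra_simps)
  show ?thesis unfolding lower_def trep_def using v sr by simp
qed

lemma lower_vec_zero: "lower_vec n s (\<lambda>_. 0) S = 0"
  unfolding lower_vec_def by simp

lemma lower_vec_scale: "lower_vec n s (\<lambda>S'. c * \<phi> S') S = c * lower_vec n s \<phi> S"
  unfolding lower_vec_def by (simp add: algebra_simps)

lemma lower_spin_pair: "lower_spin s \<psi> {1..2*s} = 2 * \<psi> {1..2*s+2}"
proof -
  have i: "insert (2*s+1) (insert (2*s+2) {1..2*s}) = {1..2*s+2}" by auto
  have s1: "sgn_ins (2*s+2) {1..2*s} = 1" by (subst sgn_ins_all_below) auto
  have s2: "sgn_ins (2*s+1) (insert (2*s+2) {1..2*s}) = 1"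
  proof -
    have "{t \<in> insert (2*s+2) {1..2*s}. t < 2*s+1} = {1..2*s}" by auto
    then show ?thesis unfolding sgn_ins_def by simp
  qed
  have s3: "sgn_ins (2*s+1) {1..2*s} = 1" by (subst sgn_ins_all_below) auto
  have s4: "sgn_ins (2*s+2) (insert (2*s+1) {1..2*s}) = -1"
  proof -
    have "insert (2*s+1) {1..2*s} = {1..2*s+1}" by auto
    then show ?thesis by (subst sgn_ins_all_below) auto
  qed
  show ?thesis unfolding lower_spin_def i s1 s2 s3 s4 by simp
qed

lemma lower_spin_full: "lower_spin s \<psi> {1..2*s+2} = 0"
  unfolding lower_spin_def by auto

lemma lower_spin_pair_iff:
  "(2*s+1 \<notin> (J::nat set) \<and> 2*s+2 \<notin> J \<and> insert (2*s+1) (insert (2*s+2) J) = {1..2*s+2})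
   \<longleftrightarrow> J = {1..2*s}"
proof
  assume h: "2*s+1 \<notin> J \<and> 2*s+2 \<notin> J \<and> insert (2*s+1) (insert (2*s+2) J) = {1..2*s+2}"
  show "J = {1..2*s}"
  proof
    show "J \<subseteq> {1..2*s}"
    proof
      fix x assume "x \<in> J"
      then have "x \<in> {1..2*s+2}" "x \<noteq> 2*s+1" "x \<noteq> 2*s+2" using h by blast+
      then show "x \<in> {1..2*s}" by auto
    qed
    show "{1..2*s} \<subseteq> J"
    proof
      fix x assume x: "x \<in> {1..2*s}"
      then have "x \<in> insert (2*s+1) (insert (2*s+2) J)" using h by auto
      then show "x \<in> J" using x by auto
    qed
  qed
qed auto

(* C picks one index from each pair {2u-1, 2u}, t < u <= r.  The associated vector index
   set is e_1 /\ .. /\ e_2t /\ e_C /\ f_C, and "lowered n r t S" says S is of this form. *)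
definition pair_choice :: "nat \<Rightarrow> nat \<Rightarrow> nat set \<Rightarrow> bool" where
  "pair_choice r t C \<longleftrightarrow>
     C \<subseteq> {2*t+1..2*r} \<and> (\<forall>u. t < u \<and> u \<le> r \<longrightarrow> (2*u-1 \<in> C \<longleftrightarrow> 2*u \<notin> C))"

definition choice_set :: "nat \<Rightarrow> nat \<Rightarrow> nat set \<Rightarrow> nat set" where
  "choice_set n t C = {1..2*t} \<union> C \<union> (\<lambda>x. x + n) ` C"

definition lowered :: "nat \<Rightarrow> nat \<Rightarrow> nat \<Rightarrow> nat set \<Rightarrow> bool" where
  "lowered n r t S \<longleftrightarrow> (\<exists>C. pair_choice r t C \<and> S = choice_set n t C)"

lemma pair_choice_subset: "pair_choice r t C \<Longrightarrow> C \<subseteq> {2*t+1..2*r}"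
  unfolding pair_choice_def by auto

lemma pair_choice_exclusive:
  assumes "pair_choice r s C" "s < r"
  shows "2*s+1 \<in> C \<longleftrightarrow> 2*s+2 \<notin> C"
proof -
  have "\<forall>u. s < u \<and> u \<le> r \<longrightarrow> (2*u-1 \<in> C \<longleftrightarrow> 2*u \<notin> C)"
    using assms(1) unfolding pair_choice_def by blast
  from spec[OF this, of "s+1"] show ?thesis using assms(2) by simp
qed

lemma pair_choice_remove:
  assumes P: "pair_choice r s C" and sr: "s < r" and x: "x \<in> C" "x \<in> {2*s+1, 2*s+2}"
  shows "pair_choice r (s+1) (C - {x})"
  unfolding pair_choice_def
proof (intro conjI allI impI)
  have a: "C \<subseteq> {2*s+1..2*r}" using P unfolding pair_choice_def by simp
  have excl: "2*s+1 \<in> C \<longleftrightarrow> 2*s+2 \<notin> C" using pair_choice_exclusive[OF P sr] .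
  show "C - {x} \<subseteq> {2*(s+1)+1..2*r}"
  proof
    fix y assume "y \<in> C - {x}"
    then have "y \<in> {2*s+1..2*r}" "y \<noteq> 2*s+1" "y \<noteq> 2*s+2" using a x excl by auto
    then show "y \<in> {2*(s+1)+1..2*r}" by auto
  qed
next
  fix u assume "s + 1 < u \<and> u \<le> r"
  then show "(2*u-1 \<in> C - {x}) = (2*u \<notin> C - {x})" using P x unfolding pair_choice_def by auto
qed

lemma pair_choice_insert:
  assumes P: "pair_choice r (s+1) C" and sr: "s < r" and x: "x \<in> {2*s+1, 2*s+2}"
  shows "pair_choice r s (insert x C)"
  unfolding pair_choice_def
proof (intro conjI allI impI)
  have sub: "C \<subseteq> {2*(s+1)+1..2*r}" using pair_choice_subset[OF P] .
  then show "insert x C \<subseteq> {2*s+1..2*r}" using x sr by auto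
  fix u assume u: "s < u \<and> u \<le> r"
  show "(2*u-1 \<in> insert x C) = (2*u \<notin> insert x C)"
  proof (cases "u = s+1")
    case True then show ?thesis using sub x by auto
  next
    case False then show ?thesis using P u x unfolding pair_choice_def by auto
  qed
qed

lemma pair_choice_card: "pair_choice r t C \<Longrightarrow> card C = r - t"
proof (induction "r - t" arbitrary: t C)
  case 0
  then have "C = {}" unfolding pair_choice_def by auto
  then show ?case using 0 by simp
next
  case (Suc d)
  then have tr: "t < r" by simp
  have fin: "finite C" using Suc.prems unfolding pair_choice_def by (auto intro: finite_subset)
  obtain x where x: "x \<in> C" "x \<in> {2*t+1, 2*t+2}"
    using pair_choice_exclusive[OF Suc.prems tr] by auto
  have "card (C - {x}) = r - (t+1)"
    using Suc.hyps(1)[of "t+1"] Suc.hyps(2) pair_choice_remove[OF Suc.prems tr x] by simp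
  then show ?case using card_Suc_Diff1[OF fin x(1)] tr by simp
qed

lemma mem_plus_image: "(x::nat) \<in> (\<lambda>y. y + n) ` C \<longleftrightarrow> n \<le> x \<and> x - n \<in> C"
proof
  assume "n \<le> x \<and> x - n \<in> C"
  then show "x \<in> (\<lambda>y. y + n) ` C" by (intro image_eqI[of _ _ "x - n"]) auto
qed auto

lemma atLeastAtMost_two_more: "{1..2*(s+1)::nat} = {1..2*s} \<union> {2*s+1, 2*s+2}" by auto

lemma card_choice_lower_part:
  assumes "pair_choice r s C" "s \<le> r"
  shows "card ({1..2*s} \<union> C) = s + r"
proof -
  have "C \<subseteq> {2*s+1..2*r}" using pair_choice_subset[OF assms(1)] .
  then have d: "{1..2*s} \<inter> C = {}" by auto
  have f: "finite C" using \<open>C \<subseteq> _\<close> by (auto intro: finite_subset)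
  have "card ({1..2*s} \<union> C) = 2*s + card C" using card_Un_disjoint[OF _ f d] by simp
  then show ?thesis using pair_choice_card[OF assms(1)] assms(2) by simp
qed

(* When lowering the pair s on the vector factor, a lowered index set for s arises from one
   for s + 1 in exactly one way: f_(2s+2) replaces e_(2s+1) if C contains 2s+2, and f_(2s+1)
   replaces e_(2s+2) if C contains 2s+1.  These two lemmas compute the index sets and signs. *)
lemma lower_vec_even_choice:
  assumes P: "pair_choice r s C" and sr: "s < r" and n: "2*r \<le> n" and q: "2*s+2 \<in> C"
    and S: "S = choice_set n s C"
  shows "n+2*s+2 \<in> S" "2*s+1 \<notin> S" "n+2*s+1 \<notin> S"
    "insert (2*s+1) (S - {n+2*s+2}) = choice_set n (s+1) (C - {2*s+2})"
    "sgn_ins (n+2*s+2) (S - {n+2*s+2}) * sgn_ins (2*s+1) (S - {n+2*s+2}) = (-1) ^ (s + r)"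
proof -
  have sub: "\<forall>x\<in>C. 2*s+1 \<le> x \<and> x \<le> 2*r" using pair_choice_subset[OF P] by auto
  have p: "2*s+1 \<notin> C" using pair_choice_exclusive[OF P sr] q by simp
  have sub2: "\<forall>x\<in>C. 2*s+2 \<le> x" using sub p by (metis Suc_eq_plus1 add_Suc_right le_antisym not_less_eq_eq one_add_one)
  show "n+2*s+2 \<in> S" using q unfolding S choice_set_def mem_plus_image by simp
  show "2*s+1 \<notin> S" using p sub sub2 sr n unfolding S choice_set_def mem_plus_image by auto
  show "n+2*s+1 \<notin> S" using p sub sub2 sr n unfolding S choice_set_def mem_plus_image by auto
  show "insert (2*s+1) (S - {n+2*s+2}) = choice_set n (s+1) (C - {2*s+2})"
    using p q sub sub2 sr n unfolding S choice_set_def atLeastAtMost_two_more mem_plus_image set_eq_iff by auto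
  have e1: "{t \<in> S - {n+2*s+2}. t < n+2*s+2} = {1..2*s} \<union> C"
    using p q sub sub2 sr n unfolding S choice_set_def atLeastAtMost_two_more mem_plus_image set_eq_iff by auto
  have e2: "{t \<in> S - {n+2*s+2}. t < 2*s+1} = {1..2*s}"
    using p q sub sub2 sr n unfolding S choice_set_def atLeastAtMost_two_more mem_plus_image set_eq_iff by auto
  show "sgn_ins (n+2*s+2) (S - {n+2*s+2}) * sgn_ins (2*s+1) (S - {n+2*s+2}) = (-1) ^ (s + r)"
  proof -
    have cl: "card ({1..2*s} \<union> C) = s + r" using card_choice_lower_part[OF P] sr by simp
    show ?thesis unfolding sgn_ins_def e1 e2 cl by (simp add: power_mult)
  qed
qed

lemma lower_vec_odd_choice:
  assumes P: "pair_choice r s C" and sr: "s < r" and n: "2*r \<le> n" and p: "2*s+1 \<in> C"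
    and S: "S = choice_set n s C"
  shows "n+2*s+1 \<in> S" "2*s+2 \<notin> S" "n+2*s+2 \<notin> S"
    "insert (2*s+2) (S - {n+2*s+1}) = choice_set n (s+1) (C - {2*s+1})"
    "sgn_ins (n+2*s+1) (S - {n+2*s+1}) * sgn_ins (2*s+2) (S - {n+2*s+1}) = - ((-1) ^ (s + r))"
proof -
  have sub: "\<forall>x\<in>C. 2*s+1 \<le> x \<and> x \<le> 2*r" using pair_choice_subset[OF P] by auto
  have q: "2*s+2 \<notin> C" using pair_choice_exclusive[OF P sr] p by simp
  have sub2: "\<forall>x\<in>C. x = 2*s+1 \<or> 2*s+3 \<le> x"
    using sub q by (metis Suc_eq_plus1 add_Suc_right le_antisym not_less_eq_eq numeral_2_eq_2
        numeral_3_eq_3 one_add_one)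
  show "n+2*s+1 \<in> S" using p unfolding S choice_set_def mem_plus_image by simp
  show "2*s+2 \<notin> S" using q sub sub2 sr n unfolding S choice_set_def mem_plus_image by auto
  show "n+2*s+2 \<notin> S" using q sub sub2 sr n unfolding S choice_set_def mem_plus_image by auto
  show "insert (2*s+2) (S - {n+2*s+1}) = choice_set n (s+1) (C - {2*s+1})"
    using p q sub sub2 sr n unfolding S choice_set_def atLeastAtMost_two_more mem_plus_image set_eq_iff by auto
  have e1: "{t \<in> S - {n+2*s+1}. t < n+2*s+1} = {1..2*s} \<union> C"
    using p q sub sub2 sr n unfolding S choice_set_def atLeastAtMost_two_more mem_plus_image set_eq_iff by auto
  have e2: "{t \<in> S - {n+2*s+1}. t < 2*s+2} = insert (2*s+1) {1..2*s}"
    using p q sub sub2 sr n unfolding S choice_set_def atLeastAtMost_two_more mem_plus_image set_eq_iff by auto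
  show "sgn_ins (n+2*s+1) (S - {n+2*s+1}) * sgn_ins (2*s+2) (S - {n+2*s+1}) = - ((-1) ^ (s + r))"
  proof -
    have cl: "card ({1..2*s} \<union> C) = s + r" using card_choice_lower_part[OF P] sr by simp
    show ?thesis unfolding sgn_ins_def e1 e2 cl by (simp add: power_mult)
  qed
qed

lemma even_choice_converse:
  assumes sr: "s < r" and n: "2*r \<le> n"
    and h: "n+2*s+2 \<in> S" "2*s+1 \<notin> S" "lowered n r (s+1) (insert (2*s+1) (S - {n+2*s+2}))"
  shows "lowered n r s S"
proof -
  obtain C where P: "pair_choice r (s+1) C"
    and eq: "insert (2*s+1) (S - {n+2*s+2}) = choice_set n (s+1) C"
    using h(3) unfolding lowered_def by blast
  have sub: "\<forall>x\<in>C. 2*s+3 \<le> x \<and> x \<le> 2*r" using pair_choice_subset[OF P] by auto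
  have "pair_choice r s (insert (2*s+2) C)" using pair_choice_insert[OF P sr] by simp
  have "S = insert (n+2*s+2) (insert (2*s+1) (S - {n+2*s+2}) - {2*s+1})" using h(1,2) by auto
  also have "\<dots> = choice_set n s (insert (2*s+2) C)"
    unfolding eq using sub n unfolding choice_set_def atLeastAtMost_two_more mem_plus_image set_eq_iff by auto
  finally show ?thesis unfolding lowered_def using \<open>pair_choice r s (insert (2*s+2) C)\<close> by blast
qed

lemma odd_choice_converse:
  assumes sr: "s < r" and n: "2*r \<le> n"
    and h: "n+2*s+1 \<in> S" "2*s+2 \<notin> S" "lowered n r (s+1) (insert (2*s+2) (S - {n+2*s+1}))"
  shows "lowered n r s S"
proof -
  obtain C where P: "pair_choice r (s+1) C"
    and eq: "insert (2*s+2) (S - {n+2*s+1}) = choice_set n (s+1) C"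
    using h(3) unfolding lowered_def by blast
  have sub: "\<forall>x\<in>C. 2*s+3 \<le> x \<and> x \<le> 2*r" using pair_choice_subset[OF P] by auto
  have "pair_choice r s (insert (2*s+1) C)" using pair_choice_insert[OF P sr] by simp
  have "S = insert (n+2*s+1) (insert (2*s+2) (S - {n+2*s+1}) - {2*s+2})" using h(1,2) by auto
  also have "\<dots> = choice_set n s (insert (2*s+1) C)"
    unfolding eq using sub n unfolding choice_set_def atLeastAtMost_two_more mem_plus_image set_eq_iff by auto
  finally show ?thesis unfolding lowered_def using \<open>pair_choice r s (insert (2*s+1) C)\<close> by blast
qed

lemma lower_vec_lowered:
  assumes sr: "s < r" and n: "2*r \<le> n"
  shows "lower_vec n s (\<lambda>S'. if lowered n r (s+1) S' then K else 0) S = (if lowered n r s S then (-1)^(s+r) * K else 0)"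
proof (cases "lowered n r s S")
  case True
  then obtain C where P: "pair_choice r s C" and S: "S = choice_set n s C" unfolding lowered_def by auto
  show ?thesis
  proof (cases "2*s+2 \<in> C")
    case True
    note q = lower_vec_even_choice[OF P sr n True S]
    have "lowered n r (s+1) (insert (2*s+1) (S - {n+2*s+2}))"
      unfolding q(4) lowered_def using pair_choice_remove[OF P sr True] by auto
    then show ?thesis unfolding lower_vec_def using q \<open>lowered n r s S\<close> by simp
  next
    case False
    then have pC: "2*s+1 \<in> C" using pair_choice_exclusive[OF P sr] by simp
    note p = lower_vec_odd_choice[OF P sr n pC S]
    have "lowered n r (s+1) (insert (2*s+2) (S - {n+2*s+1}))"
      unfolding p(4) lowered_def using pair_choice_remove[OF P sr pC] by auto
    then show ?thesis unfolding lower_vec_def using p \<open>lowered n r s S\<close> by simp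
  qed
next
  case False
  then have "\<not> (n+2*s+2 \<in> S \<and> 2*s+1 \<notin> S \<and> lowered n r (s+1) (insert (2*s+1) (S - {n+2*s+2})))"
    and "\<not> (n+2*s+1 \<in> S \<and> 2*s+2 \<notin> S \<and> lowered n r (s+1) (insert (2*s+2) (S - {n+2*s+1})))"
    using even_choice_converse[OF sr n] odd_choice_converse[OF sr n] by blast+
  then show ?thesis unfolding lower_vec_def using False by auto
qed


(* First phase: starting from v0 = e_1..e_2r (x) e_1..e_n, lower the pairs s = m-1, ..., r;
   only the spinor factor changes. *)
fun lower_spinor :: "nat \<Rightarrow> nat \<Rightarrow> nat \<Rightarrow> nat \<Rightarrow> tens" where
  "lower_spinor n m r 0 = hw_vec n (2*r)"
| "lower_spinor n m r (Suc j) = lower n (m - j - 1) (lower_spinor n m r j)"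

lemma lower_spinor_formula:
  assumes n: "n = 2*m" and rm: "r \<le> m"
  shows "j \<le> m - r \<Longrightarrow> lower_spinor n m r j = (\<lambda>x. if x = ({1..2*r}, {1..2*(m-j)}) then 2^j else 0)"
proof (induction j)
  case 0 then show ?case using n by (intro ext) (simp add: hw_vec_def hw_index_def)
next
  case (Suc j)
  define s where "s = m - j - 1"
  have sr: "r \<le> s" and s2: "2*s+2 = 2*(m-j)" and sn: "2*s+2 \<le> n" using Suc.prems n unfolding s_def by auto
  have IH: "lower_spinor n m r j = (\<lambda>x. if x = ({1..2*r}, {1..2*s+2}) then 2^j else 0)" using Suc s2 by simp
  have ms: "2*(m - Suc j) = 2*s" unfolding s_def by simp
  show ?case
  proof
    fix x :: "nat set \<times> nat set"
    obtain S J where x: "x = (S,J)" by force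
    have v: "lower_vec n s (\<lambda>S'. lower_spinor n m r j (S', J)) S = 0"
    proof -
      have "insert (2*s+1) X \<noteq> {1..2*r}" "insert (2*s+2) X \<noteq> {1..2*r}" for X
      proof -
        have "2*s+1 \<notin> {1..2*r}" "2*s+2 \<notin> {1..2*r}" using sr by auto
        then show "insert (2*s+1) X \<noteq> {1..2*r}" "insert (2*s+2) X \<noteq> {1..2*r}" by blast+
      qed
      then show ?thesis unfolding IH lower_vec_def by auto
    qed
    have sy: "lower_spin s (\<lambda>J'. lower_spinor n m r j (S, J')) J = (if S = {1..2*r} \<and> J = {1..2*s} then 2 * 2^j else 0)"
    proof (cases "J = {1..2*s}")
      case True then show ?thesis unfolding IH True lower_spin_pair by simp
    next
      case False
      then have "\<not> (2*s+1 \<notin> J \<and> 2*s+2 \<notin> J \<and> insert (2*s+1) (insert (2*s+2) J) = {1..2*s+2})"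
        using lower_spin_pair_iff by blast
      then show ?thesis unfolding IH lower_spin_def using False by auto
    qed
    show "lower_spinor n m r (Suc j) x = (if x = ({1..2*r}, {1..2*(m - Suc j)}) then 2 ^ Suc j else 0)"
      unfolding x lower_spinor.simps s_def[symmetric] lower_eq[OF sn] v sy ms by auto
  qed
qed

lemma lower_support:
  assumes sn: "2*s+2 \<le> n" and supp: "\<forall>S J. \<Phi> (S,J) \<noteq> 0 \<longrightarrow> D \<subseteq> J"
    and D: "2*s+1 \<notin> D" "2*s+2 \<notin> D"
  shows "\<forall>S J. lower n s \<Phi> (S,J) \<noteq> 0 \<longrightarrow> D \<subseteq> J"
proof (intro allI impI, rule ccontr)
  fix S J
  assume nz: "lower n s \<Phi> (S,J) \<noteq> 0" and nd: "\<not> D \<subseteq> J"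
  have z: "(\<lambda>S'. \<Phi> (S',J)) = (\<lambda>_. 0)" using supp nd by blast
  have "\<not> D \<subseteq> insert (2*s+1) (insert (2*s+2) J)" using nd D by auto
  then have z2: "\<Phi> (S, insert (2*s+1) (insert (2*s+2) J)) = 0" using supp by blast
  have "lower_spin s (\<lambda>J'. \<Phi> (S,J')) J = 0" unfolding lower_spin_def z2 by simp
  then show False using nz unfolding lower_eq[OF sn] z lower_vec_zero by simp
qed

lemma lowered_top: "lowered n r r S \<longleftrightarrow> S = {1..2*r}"
proof
  assume "lowered n r r S"
  then obtain C where "pair_choice r r C" "S = choice_set n r C" unfolding lowered_def by auto
  moreover then have "C = {}" unfolding pair_choice_def by auto
  ultimately show "S = {1..2*r}" by (simp add: choice_set_def)
next
  assume "S = {1..2*r}"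
  moreover have "pair_choice r r {}" unfolding pair_choice_def by auto
  ultimately show "lowered n r r S" unfolding lowered_def choice_set_def by auto
qed

(* One step of the second phase: applying the lowering operator of pair s twice moves the
   pair from the spinor into the vector factor, turning the indicator of level s + 1 at the
   spinor e_1..e_(2s+2) into a nonzero multiple of the indicator of level s at e_1..e_2s. *)
lemma lower_twice_step:
  assumes sr: "s < r" and n: "2*r \<le> n"
    and supp: "\<And>S J. \<Phi> (S,J) \<noteq> 0 \<Longrightarrow> {1..2*s+2} \<subseteq> J"
    and val: "\<And>S. \<Phi> (S, {1..2*s+2}) = (if lowered n r (s+1) S then K else 0)"
  shows "\<And>S J. lower n s (lower n s \<Phi>) (S,J) \<noteq> 0 \<Longrightarrow> {1..2*s} \<subseteq> J"
    and "\<And>S. lower n s (lower n s \<Phi>) (S, {1..2*s}) = (if lowered n r s S then 4 * (-1)^(s+r) * K else 0)"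
proof -
  have sn: "2*s+2 \<le> n" using sr n by simp
  have supp': "\<forall>S J. \<Phi> (S,J) \<noteq> 0 \<longrightarrow> {1..2*s} \<subseteq> J" using supp by fastforce
  have D: "2*s+1 \<notin> {1..2*s}" "2*s+2 \<notin> {1..2*s}" by auto
  have s1: "\<forall>S J. lower n s \<Phi> (S,J) \<noteq> 0 \<longrightarrow> {1..2*s} \<subseteq> J"
    using lower_support[OF sn supp' D] .
  show "\<And>S J. lower n s (lower n s \<Phi>) (S,J) \<noteq> 0 \<Longrightarrow> {1..2*s} \<subseteq> J"
    using lower_support[OF sn s1 D] by blast
  fix S
  have z0: "(\<lambda>S'. \<Phi> (S', {1..2*s})) = (\<lambda>_. 0)"
  proof
    fix S'
    have "\<not> {1..2*s+2} \<subseteq> {1..2*s}" by auto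
    then show "\<Phi> (S', {1..2*s}) = 0" using supp by blast
  qed
  have a: "lower n s \<Phi> (S', {1..2*s}) = 2 * \<Phi> (S', {1..2*s+2})" for S'
    unfolding lower_eq[OF sn] z0 lower_vec_zero lower_spin_pair by simp
  have b: "lower n s \<Phi> (S, {1..2*s+2}) = lower_vec n s (\<lambda>S'. \<Phi> (S', {1..2*s+2})) S"
    unfolding lower_eq[OF sn] lower_spin_full by simp
  have "lower n s (lower n s \<Phi>) (S, {1..2*s})
      = lower_vec n s (\<lambda>S'. 2 * \<Phi> (S', {1..2*s+2})) S + 2 * lower_vec n s (\<lambda>S'. \<Phi> (S', {1..2*s+2})) S"
    unfolding lower_eq[OF sn, of _ S "{1..2*s}"] a lower_spin_pair b ..
  also have "\<dots> = 4 * lower_vec n s (\<lambda>S'. if lowered n r (s+1) S' then K else 0) S"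
    unfolding lower_vec_scale val by simp
  also have "\<dots> = (if lowered n r s S then 4 * (-1)^(s+r) * K else 0)"
    unfolding lower_vec_lowered[OF sr n] by simp
  finally show "lower n s (lower n s \<Phi>) (S, {1..2*s}) = (if lowered n r s S then 4 * (-1)^(s+r) * K else 0)" .
qed

fun lower_pairs :: "nat \<Rightarrow> nat \<Rightarrow> nat \<Rightarrow> nat \<Rightarrow> tens" where
  "lower_pairs n m r 0 = lower_spinor n m r (m - r)"
| "lower_pairs n m r (Suc j) = lower n (r - j - 1) (lower n (r - j - 1) (lower_pairs n m r j))"

lemma lower_pairs_invariant:
  assumes n: "n = 2*m" and rm: "r \<le> m"
  shows "j \<le> r \<Longrightarrow> \<exists>K. K \<noteq> 0
           \<and> (\<forall>S J. lower_pairs n m r j (S,J) \<noteq> 0 \<longrightarrow> {1..2*(r-j)} \<subseteq> J)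
           \<and> (\<forall>S. lower_pairs n m r j (S, {1..2*(r-j)}) = (if lowered n r (r-j) S then K else 0))"
proof (induction j)
  case 0
  have B: "lower_pairs n m r 0 = (\<lambda>x. if x = ({1..2*r}, {1..2*r}) then 2^(m-r) else 0)"
  proof -
    have "m - (m - r) = r" using rm by simp
    then show ?thesis using lower_spinor_formula[OF n rm, of "m - r"] by simp
  qed
  show ?case
    unfolding B by (rule exI[of _ "2^(m-r)"]) (auto simp: lowered_top)
next
  case (Suc j)
  define s where "s = r - j - 1"
  have sr: "s < r" and rj: "r - j = s + 1" "r - Suc j = s" and nn: "2*r \<le> n"
    using Suc.prems n rm unfolding s_def by auto
  obtain K where K: "K \<noteq> 0" "\<forall>S J. lower_pairs n m r j (S,J) \<noteq> 0 \<longrightarrow> {1..2*s+2} \<subseteq> J"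
    "\<forall>S. lower_pairs n m r j (S, {1..2*s+2}) = (if lowered n r (s+1) S then K else 0)"
    using Suc.IH Suc.prems rj by (auto simp: algebra_simps)
  note st = lower_twice_step[OF sr nn, of "lower_pairs n m r j" K]
  have A: "lower_pairs n m r (Suc j) = lower n s (lower n s (lower_pairs n m r j))" by (simp add: s_def)
  show ?case
    unfolding A rj using st K by (intro exI[of _ "4 * (-1)^(s+r) * K"]) auto
qed

lemma lower_mem:
  assumes U: "is_submodule n k U" and sn: "2*s+2 \<le> n" and \<Phi>: "\<Phi> \<in> U"
  shows "lower n s \<Phi> \<in> U"
  using U \<Phi> sn unfolding is_submodule_def lower_def by auto

lemma lower_spinor_mem:
  assumes U: "is_submodule n k U" and v: "hw_vec n (2*r) \<in> U" and n: "n = 2*m"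
  shows "j \<le> m - r \<Longrightarrow> lower_spinor n m r j \<in> U"
proof (induction j)
  case 0 then show ?case using v by simp
next
  case (Suc j)
  have "2*(m - j - 1)+2 \<le> n" using Suc.prems n by auto
  then show ?case using lower_mem[OF U] Suc by simp
qed

lemma lower_pairs_mem:
  assumes U: "is_submodule n k U" and v: "hw_vec n (2*r) \<in> U" and n: "n = 2*m" and rm: "r \<le> m"
  shows "j \<le> r \<Longrightarrow> lower_pairs n m r j \<in> U"
proof (induction j)
  case 0 then show ?case using lower_spinor_mem[OF U v n] by simp
next
  case (Suc j)
  have "2*(r - j - 1)+2 \<le> n" using Suc.prems n rm by auto
  then show ?case using lower_mem[OF U] Suc by simp
qed

(* The odd numbers form a choice, so the final vector does not vanish. *)
lemma pair_choice_odd: "pair_choice r 0 {x \<in> {1..2*r}. odd x}"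
  unfolding pair_choice_def by auto

(* At the spinor J = {} the final vector is K times the indicator of the index sets
   C u (C + n); psi has coefficient 1 at each of them and vanishes at other spinors, so the
   pairing is a positive multiple of cnj K. *)
lemma tform_psi_nonzero:
  assumes n: "n = 2*m" and r: "r = m - i" and K: "K \<noteq> 0"
    and w: "\<And>S. w (S, {}) = (if lowered n r 0 S then K else 0)"
  shows "tform n (psi n m i) w \<noteq> 0"
proof -
  let ?A = "Pow {1..2*n} \<times> Pow {1..n}"
  let ?P = "\<lambda>x. snd x = {} \<and> lowered n r 0 (fst x)"
  have summ: "of_real (2 ^ card (snd x)) * psi n m i x * cnj (w x) = (if ?P x then cnj K else 0)" for x
  proof -
    obtain S J where x: "x = (S,J)" by force
    show ?thesis
    proof (cases "J = {}")
      case False then show ?thesis unfolding x psi_def by simp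
    next
      case True
      show ?thesis
      proof (cases "lowered n r 0 S")
        case True
        then obtain C where P: "pair_choice r 0 C" and S: "S = choice_set n 0 C" unfolding lowered_def by auto
        have "C \<subseteq> {1..2*r}" using pair_choice_subset[OF P] by simp
        moreover have "{1..2*r} \<subseteq> {1..n}" using n r by auto
        ultimately have "C \<subseteq> {1..n}" by (rule order_trans)
        moreover have "card C = m - i" using pair_choice_card[OF P] r by simp
        moreover have "S = C \<union> (\<lambda>x. x + n) ` C" using S by (simp add: choice_set_def)
        ultimately have "psi n m i (S, {}) = 1" unfolding psi_def by auto
        then show ?thesis using True \<open>J = {}\<close> w unfolding x by simp
      next
        case False
        then show ?thesis using \<open>J = {}\<close> w unfolding x by simp
      qed
    qed
  qed
  have "tform n (psi n m i) w = (\<Sum>x\<in>?A. if ?P x then cnj K else 0)"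
    unfolding tform_def using summ by simp
  also have "\<dots> = of_nat (card (?A \<inter> {x. ?P x})) * cnj K"
    by (simp add: sum.If_cases)
  finally have eq: "tform n (psi n m i) w = of_nat (card (?A \<inter> {x. ?P x})) * cnj K" .
  let ?C = "{x \<in> {1..2*r}. odd x}"
  have mem: "(choice_set n 0 ?C, {}) \<in> ?A \<inter> {x. ?P x}"
  proof -
    have "choice_set n 0 ?C \<subseteq> {1..2*n}" using n r unfolding choice_set_def by auto
    moreover have "lowered n r 0 (choice_set n 0 ?C)" unfolding lowered_def using pair_choice_odd by blast
    ultimately show ?thesis by auto
  qed
  have fin: "finite (?A \<inter> {x. ?P x})" by simp
  have ne: "?A \<inter> {x. ?P x} \<noteq> {}" using mem by blast
  have "card (?A \<inter> {x. ?P x}) \<noteq> 0" using ne by (simp only: card_0_eq[OF fin] not_False_eq_True)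
  then show ?thesis unfolding eq using K by simp
qed


lemma submodule_pairs_with_psi:
  assumes n: "n = 2*m" and r: "r = m - i" and W: "is_submodule n k W" and v: "hw_vec n (2*r) \<in> W"
  shows "\<exists>w\<in>W. tform n (psi n m i) w \<noteq> 0"
proof -
  have rm: "r \<le> m" using r by simp
  obtain K where K: "K \<noteq> 0"
    "\<forall>S. lower_pairs n m r r (S, {1..2*(r-r)}) = (if lowered n r (r-r) S then K else 0)"
    using lower_pairs_invariant[OF n rm, of r] by blast
  have "tform n (psi n m i) (lower_pairs n m r r) \<noteq> 0"
    by (rule tform_psi_nonzero[OF n r K(1)]) (use K(2) in simp)
  moreover have "lower_pairs n m r r \<in> W" using lower_pairs_mem[OF W v n rm] by simp
  ultimately show ?thesis by blast
qed

theorem lemma4p4: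
  fixes n m i :: nat
  assumes "n = 2 * m" and "1 \<le> i" and "i \<le> m"
  shows "(\<exists>W. cartan_component n (n - 2 * i) W) \<and>
         (\<forall>W. cartan_component n (n - 2 * i) W \<longrightarrow>
              proj_nonzero n (n - 2 * i) W (psi n m i))"
proof -
  define k where "k = n - 2 * i"
  have k: "k \<le> n" "even n" "k = 2 * (m - i)" using assms unfolding k_def by auto
  have "proj_nonzero n k W (psi n m i)" if W: "cartan_component n k W" for W
    unfolding proj_nonzero_def
  proof (intro allI impI notI)
    fix U assume U: "inv_complement n k W U" and psi: "psi n m i \<in> U"
    have "is_submodule n k W" using W unfolding cartan_component_def irreducible_sub_def by blast
    moreover have "hw_vec n (2 * (m - i)) \<in> W" using cartan_component_hw_vec[OF W k(1)] k(3) by simp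
    ultimately obtain w where "w \<in> W" "tform n (psi n m i) w \<noteq> 0"
      using submodule_pairs_with_psi[OF assms(1) refl] by blast
    moreover have "W \<subseteq> perp n k U" using cartan_component_perp_complement[OF W U k(1,2)] .
    ultimately show False using psi unfolding perp_def by blast
  qed
  then show ?thesis using cartan_component_exists[OF k(1,2)] unfolding k_def by blast
qed

end
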